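(* The space $\mathsf{scf}(\mathrm{UT}_\bullet)=\bigoplus_{n\ge0}\mathsf{scf}(\mathrm{UT}_n)$ is a sub-Hopf algebra of $\mathsf{cf}(\mathrm{UT}_\bullet)$ and is isomorphic to $\mathsf{IG}(q^{-1})$. In particular, for $\pi\in\mathcal{NO}_n$ and $\rho\in\mathcal{NO}_m$ with $n,m\ge0$, $$\mu(\overline{\delta}_\pi\otimes\overline{\delta}_\rho)=\overline{\delta}_{\pi\star_n\rho}\qquad\text{and}\qquad\Delta(\overline{\delta}_\pi)=\sum_{I\subseteq[n]}q^{-\mathrm{asc}_I(\pi)}\,\overline{\delta}_{\pi|^{sh}_I}\otimes\overline{\delta}_{\pi|^{sh}_{I^c}}.$$
   Context: Fix the finite field $\mathbb{F}_q$; $[n]=\{1,\dots,n\}$. $\mathrm{UT}_n$ is the group of $n\times n$ unipotent upper triangular matrices over $\mathbb{F}_q$. A natural unit interval order of $[n]$ is a partial order $\pi\subseteq[n]\times[n]$ with $(i,j)\in\pi\Rightarrow i\le j$ such that for every $(j,k)\in\pi$ with $j\ne k$, all $(i,l)$ with $i\le j$, $k\le l$ lie in $\pi$; $\mathcal{NO}_n$ is the set of these. For such $\pi$, $\mathrm{UT}(\pi)=\{g\in\mathrm{UT}_n:(g-1_n)_{i,j}\ne0\text{ only if }(i,j)\in\pi\}$, $\overline{\delta}_\pi$ is its indicator function, and $\mathsf{scf}(\mathrm{UT}_n)=\mathbb{C}\text{-span}\{\mathrm{Ind}^{\mathrm{UT}_n}_{\mathrm{UT}(\pi)}(\mathbb{1}):\pi\in\mathcal{NO}_n\}$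 ($\mathbb{1}$ the trivial character), which is also spanned by $\{\overline{\delta}_\pi:\pi\in\mathcal{NO}_n\}$. Hopf algebra $\mathsf{cf}(\mathrm{UT}_\bullet)=\bigoplus_n\mathsf{cf}(\mathrm{UT}_n)$ ($\mathsf{cf}$ = complex class functions): for $I\subseteq[n]$, $I^c=[n]\setminus I$, let $\mathrm{UL}_I=\{g\in\mathrm{UT}_n:(g-1_n)_{i,j}\ne0\text{ only if }(i,j)\in I\times I\cup I^c\times I^c\}$, $\mathrm{UR}_I=\{g:(g-1_n)_{i,j}\ne0\text{ only if }(i,j)\in I\times I^c\}$, $\mathrm{UP}_I=\{g:(g-1_n)_{i,j}=0\text{ for }(i,j)\in I^c\times I\}=\mathrm{UL}_I\ltimes\mathrm{UR}_I$ ($\mathrm{UP}_{[i]}=\mathrm{UT}_n$). With $\mathrm{cano}_I:I\to[|I|]$ order-preserving, $\mathrm{UL}_I\cong\mathrm{UT}_{|I|}\times\mathrm{UT}_{|I^c|}$ by relabelling blocks, inducing $\mathrm{st}_{(I,I^c)}$. Product $\mu=\bigoplus_{n\ge i\ge0}\mathrm{Inf}^{\mathrm{UT}_n}_{\mathrm{UL}_{[i]}}\circ\mathrm{st}^{-1}_{([i],[i]^c)}$ with $\mathrm{Inf}\psi(lr)=\psi(l)$; coproduct $\Delta=\bigoplus_n\sum_{I\subseteq[n]}\mathrm{st}_{(I,I^c)}\circ\mathrm{Def}^{\mathrm{UP}_I}_{\mathrm{UL}_I}\circ\mathrm{Res}^{\mathrm{UT}_n}_{\mathrm{UP}_I}$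 with $\mathrm{Def}\psi(g)=\frac1{|\mathrm{UR}_I|}\sum_{x\in\mathrm{UR}_I}\psi(gx)$. Shifted ordinal sum: $\pi\star_n\rho=\pi\sqcup\{(i+n,j+n):(i,j)\in\rho\}\sqcup([n]\times([n+m]\setminus[n]))$. For $I\subseteq[n]$: $\pi|^{sh}_I=\{(\mathrm{cano}_I(i),\mathrm{cano}_I(j)):(i,j)\in\pi,\ i,j\in I\}$ and $\mathrm{asc}_I(\pi)=|\{(i,j)\in I\times I^c:i<j,(i,j)\notin\pi\}|$. $\mathsf{IG}(q^{-1})$ is the $\mathbb{C}$-Hopf algebra with basis $\{\mathrm{inc}(\pi):\pi\in\mathcal{NO}_n,n\ge0\}$, product $\mathrm{inc}(\pi)\otimes\mathrm{inc}(\rho)\mapsto\mathrm{inc}(\pi\star_n\rho)$ and coproduct $\mathrm{inc}(\pi)\mapsto\sum_{I\subseteq[n]}q^{-\mathrm{asc}_I(\pi)}\mathrm{inc}(\pi|^{sh}_I)\otimes\mathrm{inc}(\pi|^{sh}_{I^c})$. *)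

theory Defs
  imports Complex_Main
begin

text \<open>An n x n matrix has entries indexed by [n] = {1..n} and is 0 outside [n] x [n].
  The field F_q is a type 'a of class {finite, field}; q = CARD('a).\<close>

type_synonym 'a mat = "nat \<Rightarrow> nat \<Rightarrow> 'a"

definition idm :: "nat \<Rightarrow> 'a::field mat" where
  "idm n = (\<lambda>i j. if i = j \<and> i \<in> {1..n} then 1 else 0)"

definition mmult :: "nat \<Rightarrow> 'a::field mat \<Rightarrow> 'a mat \<Rightarrow> 'a mat" where
  "mmult n g h = (\<lambda>i j. if i \<in> {1..n} \<and> j \<in> {1..n} then (\<Sum>k\<in>{1..n}. g i k * h k j) else 0)"

definition UT :: "nat \<Rightarrow> 'a::field mat set" where
  "UT n = {g. (\<forall>i j. (i \<notin> {1..n} \<or> j \<notin> {1..n}) \<longrightarrow> g i j = 0)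
              \<and> (\<forall>i\<in>{1..n}. g i i = 1) \<and> (\<forall>i j. j < i \<longrightarrow> g i j = 0)}"

definition NO :: "nat \<Rightarrow> (nat \<times> nat) set set" where
  "NO n = {\<pi>. \<pi> \<subseteq> {1..n} \<times> {1..n}
             \<and> (\<forall>i\<in>{1..n}. (i, i) \<in> \<pi>) \<and> antisym \<pi> \<and> trans \<pi>
             \<and> (\<forall>(i, j)\<in>\<pi>. i \<le> j)
             \<and> (\<forall>(j, k)\<in>\<pi>. j \<noteq> k \<longrightarrow>
                   (\<forall>i\<in>{1..n}. \<forall>l\<in>{1..n}. i \<le> j \<and> k \<le> l \<longrightarrow> (i, l) \<in> \<pi>))}"

definition UTpat :: "nat \<Rightarrow> (nat \<times> nat) set \<Rightarrow> 'a::field mat set" where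
  "UTpat n \<pi> = {g \<in> UT n. \<forall>i j. g i j - idm n i j \<noteq> 0 \<longrightarrow> (i, j) \<in> \<pi>}"

definition delta :: "nat \<Rightarrow> (nat \<times> nat) set \<Rightarrow> 'a::field mat \<Rightarrow> complex" where
  "delta n \<pi> = (\<lambda>g. if g \<in> UTpat n \<pi> then 1 else 0)"

definition cspan :: "('b \<Rightarrow> complex) set \<Rightarrow> ('b \<Rightarrow> complex) set" where
  "cspan X = {(\<lambda>x. \<Sum>s\<in>S. c s * s x) | S c. finite S \<and> S \<subseteq> X}"

definition cf :: "nat \<Rightarrow> ('a::field mat \<Rightarrow> complex) set" where
  "cf n = {f. (\<forall>g. g \<notin> UT n \<longrightarrow> f g = 0)
            \<and> (\<forall>g\<in>UT n. \<forall>h\<in>UT n. \<forall>x\<in>UT n. mmult n g x = mmult n x h \<longrightarrow> f g = f h)}"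

text \<open>Ind_H^{UT_n}(1)(g) = (1/|H|) * #{x in UT_n. x^-1 g x in H}; x^-1 g x = h iff g x = x h.\<close>
definition IndTriv :: "nat \<Rightarrow> 'a::field mat set \<Rightarrow> 'a mat \<Rightarrow> complex" where
  "IndTriv n H = (\<lambda>g. if g \<in> UT n
       then of_nat (card {x \<in> UT n. \<exists>h\<in>H. mmult n g x = mmult n x h}) / of_nat (card H)
       else 0)"

definition scf :: "nat \<Rightarrow> ('a::field mat \<Rightarrow> complex) set" where
  "scf n = cspan {IndTriv n (UTpat n \<pi>) | \<pi>. \<pi> \<in> NO n}"

definition cano :: "nat set \<Rightarrow> nat \<Rightarrow> nat" where
  "cano I i = card {k \<in> I. k \<le> i}"

definition decano :: "nat set \<Rightarrow> nat \<Rightarrow> nat" where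
  "decano I = the_inv_into I (cano I)"

definition sub :: "nat set \<Rightarrow> 'a::field mat \<Rightarrow> 'a mat" where
  "sub I g = (\<lambda>i j. if i \<in> {1..card I} \<and> j \<in> {1..card I} then g (decano I i) (decano I j) else 0)"

text \<open>Inverse of UL_I ~ UT_|I| x UT_|I^c|: glue two matrices into block form.\<close>
definition glue :: "nat \<Rightarrow> nat set \<Rightarrow> 'a::field mat \<Rightarrow> 'a mat \<Rightarrow> 'a mat" where
  "glue n I a b = (\<lambda>i j. if i \<in> I \<and> j \<in> I then a (cano I i) (cano I j)
       else if i \<in> {1..n} - I \<and> j \<in> {1..n} - I
         then b (cano ({1..n} - I) i) (cano ({1..n} - I) j) else 0)"

definition UL :: "nat \<Rightarrow> nat set \<Rightarrow> 'a::field mat set" where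
  "UL n I = {g \<in> UT n. \<forall>i j. g i j - idm n i j \<noteq> 0 \<longrightarrow>
                (i, j) \<in> I \<times> I \<union> ({1..n} - I) \<times> ({1..n} - I)}"

definition UR :: "nat \<Rightarrow> nat set \<Rightarrow> 'a::field mat set" where
  "UR n I = {g \<in> UT n. \<forall>i j. g i j - idm n i j \<noteq> 0 \<longrightarrow> (i, j) \<in> I \<times> ({1..n} - I)}"

definition UP :: "nat \<Rightarrow> nat set \<Rightarrow> 'a::field mat set" where
  "UP n I = {g \<in> UT n. \<forall>(i, j) \<in> ({1..n} - I) \<times> I. g i j - idm n i j = 0}"

text \<open>Inflation from UL_I to UT_n (used with I = [i] so that UP_I = UT_n): Inf psi (l r) = psi l.\<close>
definition Infl :: "nat \<Rightarrow> nat set \<Rightarrow> ('a::field mat \<Rightarrow> complex) \<Rightarrow> 'a mat \<Rightarrow> complex" where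
  "Infl n I \<psi> = (\<lambda>g. if g \<in> UT n
       then \<psi> (THE l. l \<in> UL n I \<and> (\<exists>r\<in>UR n I. g = mmult n l r)) else 0)"

text \<open>Product mu : cf(UT_n) (x) cf(UT_m) -> cf(UT_{n+m}), Inf o st^{-1}.\<close>
definition mu :: "nat \<Rightarrow> nat \<Rightarrow> ('a::field mat \<Rightarrow> complex) \<Rightarrow> ('a mat \<Rightarrow> complex) \<Rightarrow> 'a mat \<Rightarrow> complex" where
  "mu n m \<psi> \<phi> = Infl (n + m) {1..n}
       (\<lambda>l. \<psi> (sub {1..n} l) * \<phi> (sub ({1..n+m} - {1..n}) l))"

definition Res :: "nat \<Rightarrow> nat set \<Rightarrow> ('a::field mat \<Rightarrow> complex) \<Rightarrow> 'a mat \<Rightarrow> complex" where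
  "Res n I \<psi> = (\<lambda>g. if g \<in> UP n I then \<psi> g else 0)"

definition Defl :: "nat \<Rightarrow> nat set \<Rightarrow> ('a::field mat \<Rightarrow> complex) \<Rightarrow> 'a mat \<Rightarrow> complex" where
  "Defl n I \<psi> = (\<lambda>g. (\<Sum>x\<in>UR n I. \<psi> (mmult n g x)) / of_nat (card (UR n I :: 'a mat set)))"

text \<open>The tensor product cf(UT_k) (x) cf(UT_l) is identified with functions on
  pairs of matrices (u (x) v = (a,b) |-> u a * v b); the degree-n part of
  cf(UT) (x) cf(UT) is the space of functions on pairs supported on the union over k of UT_k x UT_(n-k).\<close>
definition Delta :: "nat \<Rightarrow> ('a::field mat \<Rightarrow> complex) \<Rightarrow> 'a mat \<times> 'a mat \<Rightarrow> complex" where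
  "Delta n \<psi> = (\<lambda>(a, b). \<Sum>I\<in>Pow {1..n}.
       if a \<in> UT (card I) \<and> b \<in> UT (n - card I)
       then Defl n I (Res n I \<psi>) (glue n I a b) else 0)"

definition tens :: "('b \<Rightarrow> complex) \<Rightarrow> ('c \<Rightarrow> complex) \<Rightarrow> 'b \<times> 'c \<Rightarrow> complex" where
  "tens u v = (\<lambda>(a, b). u a * v b)"

definition ostar :: "nat \<Rightarrow> nat \<Rightarrow> (nat \<times> nat) set \<Rightarrow> (nat \<times> nat) set \<Rightarrow> (nat \<times> nat) set" where
  "ostar n m \<pi> \<rho> = \<pi> \<union> {(i + n, j + n) | i j. (i, j) \<in> \<rho>} \<union> ({1..n} \<times> ({1..n+m} - {1..n}))"

definition shres :: "nat set \<Rightarrow> (nat \<times> nat) set \<Rightarrow> (nat \<times> nat) set" where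
  "shres I \<pi> = {(cano I i, cano I j) | i j. (i, j) \<in> \<pi> \<and> i \<in> I \<and> j \<in> I}"

definition asc :: "nat \<Rightarrow> nat set \<Rightarrow> (nat \<times> nat) set \<Rightarrow> nat" where
  "asc n I \<pi> = card {(i, j) \<in> I \<times> ({1..n} - I). i < j \<and> (i, j) \<notin> \<pi>}"

end

theory Submission
  imports Defs "HOL-Library.FuncSet"
begin

text \<open>For \<open>\<pi> \<in> NO n\<close> the pattern group \<open>UT(\<pi>)\<close> is normal in \<open>UT n\<close>: the closure condition
  defining natural unit interval orders says precisely that multiplying \<open>g - 1\<close> on either side by
  a unitriangular matrix keeps its support inside \<open>\<pi>\<close>. Hence the character induced from the
  trivial character of \<open>UT(\<pi>)\<close> is a multiple of the indicator \<open>\<delta>\<^sub>\<pi>\<close>, so the \<open>\<delta>\<^sub>\<pi>\<close> span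
  \<open>scf(UT n)\<close>; they are linearly independent, as one sees by evaluating at \<open>0/1\<close> pattern matrices.

  The product inflates from the block-diagonal (Levi) factor of \<open>g \<in> UT (n + m)\<close>, so
  \<open>\<mu>(\<delta>\<^sub>\<pi> \<otimes> \<delta>\<^sub>\<rho>)\<close> tests the two diagonal blocks against \<open>\<pi>\<close> and \<open>\<rho>\<close> and leaves the
  off-diagonal block free, which is exactly membership in \<open>UT(\<pi> \<star> \<rho>)\<close>. For the coproduct, a
  product \<open>l r\<close> with \<open>l \<in> UL_I\<close>, \<open>r \<in> UR_I\<close> lies in \<open>UT(\<pi>)\<close> iff both factors do, because
  \<open>l r - 1 = (l - 1) + l (r - 1)\<close> splits into the diagonal and off-diagonal blocks. Deflation
  therefore multiplies the indicator of \<open>UL_I \<inter> UT(\<pi>)\<close> by \<open>|UR_I \<inter> UT(\<pi>)| / |UR_I| =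
  q ^ -asc_I(\<pi>)\<close>, and a block-diagonal matrix lies in \<open>UT(\<pi>)\<close> iff its two blocks lie in the
  pattern groups of the restricted orders.\<close>

definition supported_on :: "'a::zero mat \<Rightarrow> (nat \<times> nat) set \<Rightarrow> bool" where
  "supported_on X T \<longleftrightarrow> (\<forall>i j. X i j \<noteq> 0 \<longrightarrow> (i, j) \<in> T)"

definition mats_on :: "(nat \<times> nat) set \<Rightarrow> 'a::zero mat set" where
  "mats_on T = {X. supported_on X T}"

definition strict_upper :: "nat \<Rightarrow> (nat \<times> nat) set" where
  "strict_upper n = {(i, j). i \<in> {1..n} \<and> j \<in> {1..n} \<and> i < j}"

definition mdiff :: "'a::ab_group_add mat \<Rightarrow> 'a mat \<Rightarrow> 'a mat" where
  "mdiff g h = (\<lambda>i j. g i j - h i j)"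

lemma finite_strict_upper: "finite (strict_upper n)"
  by (rule finite_subset[of _ "{1..n} \<times> {1..n}"]) (auto simp: strict_upper_def)

lemma bij_betw_mats_on_PiE:
  "bij_betw (\<lambda>X p. if p \<in> T then X (fst p) (snd p) else undefined)
     (mats_on T :: 'a::zero mat set) (T \<rightarrow>\<^sub>E UNIV)"
  by (rule bij_betw_byWitness[where f' = "\<lambda>f i j. if (i, j) \<in> T then f (i, j) else 0"])
     (auto simp: mats_on_def supported_on_def fun_eq_iff PiE_def extensional_def split: if_splits)

lemma card_mats_on:
  "finite T \<Longrightarrow> card (mats_on T :: 'a::{finite,zero} mat set) = card (UNIV :: 'a set) ^ card T"
  using bij_betw_same_card[OF bij_betw_mats_on_PiE[of T]] by (simp add: card_PiE)

lemma finite_mats_on: "finite T \<Longrightarrow> finite (mats_on T :: 'a::{finite,zero} mat set)"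
  using bij_betw_finite[OF bij_betw_mats_on_PiE[of T]] by (auto intro!: finite_PiE)

lemma supported_on_mono: "supported_on X S \<Longrightarrow> S \<subseteq> T \<Longrightarrow> supported_on X T"
  by (auto simp: supported_on_def)

lemma supported_on_add_disjoint_iff:
  fixes A B :: "'a::monoid_add mat"
  assumes A: "supported_on A S" and B: "supported_on B T" and ST: "S \<inter> T = {}"
  shows "supported_on (\<lambda>i j. A i j + B i j) P \<longleftrightarrow> supported_on A P \<and> supported_on B P"
proof -
  have zero: "A i j = 0 \<or> B i j = 0" for i j
    using A B ST unfolding supported_on_def by blast
  have "A i j + B i j \<noteq> 0 \<longleftrightarrow> A i j \<noteq> 0 \<or> B i j \<noteq> 0" for i j
    using zero[of i j] by auto
  then show ?thesis
    unfolding supported_on_def by blast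
qed

lemma UT_out: "g \<in> UT n \<Longrightarrow> i \<notin> {1..n} \<or> j \<notin> {1..n} \<Longrightarrow> g i j = 0"
  by (auto simp: UT_def)

lemma UT_diag: "g \<in> UT n \<Longrightarrow> i \<in> {1..n} \<Longrightarrow> g i i = 1"
  by (auto simp: UT_def)

lemma UT_below_diag: "g \<in> UT n \<Longrightarrow> j < i \<Longrightarrow> g i j = 0"
  by (auto simp: UT_def)

lemma UT_nonzero: "g \<in> UT n \<Longrightarrow> g i j \<noteq> 0 \<Longrightarrow> i \<in> {1..n} \<and> j \<in> {1..n} \<and> i \<le> j"
  using UT_out UT_below_diag by (metis not_le)

lemma idm_in_UT: "idm n \<in> UT n"
  by (auto simp: UT_def idm_def)

lemma UT_supported_on: "g \<in> UT n \<Longrightarrow> supported_on g ({1..n} \<times> {1..n})"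
  by (auto simp: supported_on_def dest: UT_nonzero)

lemma UT_iff_mdiff_idm:
  "g \<in> UT n \<longleftrightarrow> supported_on (mdiff g (idm n)) (strict_upper n)"
proof
  assume g: "g \<in> UT n"
  have "(i, j) \<in> strict_upper n" if ne: "g i j - idm n i j \<noteq> 0" for i j
  proof (cases "i = j")
    case True
    then show ?thesis
      using ne UT_diag[OF g, of i] UT_out[OF g, of i i] by (auto simp: idm_def split: if_splits)
  next
    case False
    then have "g i j \<noteq> 0"
      using ne by (simp add: idm_def)
    then show ?thesis
      using False UT_nonzero[OF g, of i j] by (auto simp: strict_upper_def)
  qed
  then show "supported_on (mdiff g (idm n)) (strict_upper n)"
    by (simp add: supported_on_def mdiff_def)
next
  assume "supported_on (mdiff g (idm n)) (strict_upper n)"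
  then have eq: "g i j = idm n i j" if "(i, j) \<notin> strict_upper n" for i j
    using that unfolding supported_on_def mdiff_def by (metis eq_iff_diff_eq_0)
  show "g \<in> UT n"
    unfolding UT_def
  proof (intro CollectI conjI allI impI ballI)
    show "g i j = 0" if "i \<notin> {1..n} \<or> j \<notin> {1..n}" for i j
      using that eq[of i j] by (auto simp: idm_def strict_upper_def)
    show "g i i = 1" if "i \<in> {1..n}" for i
      using that eq[of i i] by (simp add: idm_def strict_upper_def)
    show "g i j = 0" if "j < i" for i j :: nat
      using that eq[of i j] by (simp add: idm_def strict_upper_def)
  qed
qed

lemma mmult_in_UT:
  assumes g: "g \<in> UT n" and h: "h \<in> UT n"
  shows "mmult n g h \<in> UT n"
proof -
  have diag: "(\<Sum>k\<in>{1..n}. g i k * h k i) = 1" if i: "i \<in> {1..n}" for i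
  proof -
    have "(\<Sum>k\<in>{1..n}. g i k * h k i) = (\<Sum>k\<in>{1..n}. if k = i then 1 else 0)"
    proof (rule sum.cong)
      fix k
      show "g i k * h k i = (if k = i then 1 else 0)"
        using UT_diag[OF g i] UT_diag[OF h i] UT_below_diag[OF g, of k i] UT_below_diag[OF h, of i k]
        by (cases k i rule: linorder_cases) auto
    qed simp
    then show ?thesis
      using i by simp
  qed
  have below: "(\<Sum>k\<in>{1..n}. g i k * h k j) = 0" if "j < i" for i j
    by (rule sum.neutral)
       (metis UT_below_diag g h mult_eq_0_iff not_le order.strict_trans1 that)
  show ?thesis
    unfolding UT_def mmult_def using diag below by auto
qed

lemma mmult_idm_left:
  assumes "supported_on x ({1..n} \<times> {1..n})"
  shows "mmult n (idm n) x = x"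
proof -
  have "(\<Sum>k\<in>{1..n}. idm n i k * x k j) = (\<Sum>k\<in>{1..n}. if i = k then x k j else 0)" for i j
    by (rule sum.cong) (auto simp: idm_def)
  then have "(\<Sum>k\<in>{1..n}. idm n i k * x k j) = x i j" if "i \<in> {1..n}" for i j
    using that by simp
  moreover have "x i j = 0" if "\<not> (i \<in> {1..n} \<and> j \<in> {1..n})" for i j
    using assms that unfolding supported_on_def by blast
  ultimately show ?thesis
    unfolding mmult_def fun_eq_iff by auto
qed

lemma mmult_idm_right:
  assumes "supported_on x ({1..n} \<times> {1..n})"
  shows "mmult n x (idm n) = x"
proof -
  have "(\<Sum>k\<in>{1..n}. x i k * idm n k j) = (\<Sum>k\<in>{1..n}. if j = k then x i k else 0)" for i j
    by (rule sum.cong) (auto simp: idm_def)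
  then have "(\<Sum>k\<in>{1..n}. x i k * idm n k j) = x i j" if "j \<in> {1..n}" for i j
    using that by simp
  moreover have "x i j = 0" if "\<not> (i \<in> {1..n} \<and> j \<in> {1..n})" for i j
    using assms that unfolding supported_on_def by blast
  ultimately show ?thesis
    unfolding mmult_def fun_eq_iff by auto
qed

lemma mmult_mdiff_left: "mmult n (mdiff g h) x = mdiff (mmult n g x) (mmult n h x)"
  unfolding mmult_def mdiff_def fun_eq_iff by (auto simp: left_diff_distrib sum_subtractf)

lemma mmult_mdiff_right: "mmult n x (mdiff g h) = mdiff (mmult n x g) (mmult n x h)"
  unfolding mmult_def mdiff_def fun_eq_iff by (auto simp: right_diff_distrib sum_subtractf)

lemma mmult_mdiff_idm_left: "x \<in> UT n \<Longrightarrow> mmult n (mdiff g (idm n)) x = mdiff (mmult n g x) x"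
  by (simp add: mmult_mdiff_left mmult_idm_left[OF UT_supported_on])

lemma mmult_mdiff_idm_right: "x \<in> UT n \<Longrightarrow> mmult n x (mdiff h (idm n)) = mdiff (mmult n x h) x"
  by (simp add: mmult_mdiff_right mmult_idm_right[OF UT_supported_on])

lemma mmult_eq_add_mmult_mdiff_idm:
  "l \<in> UT n \<Longrightarrow> mmult n l r i j = l i j + mmult n l (mdiff r (idm n)) i j"
  using mmult_mdiff_idm_right[of l n r] by (simp add: mdiff_def fun_eq_iff)

text \<open>Exactly the conditions under which the strictly upper triangular matrices supported on a
  pattern are stable under left (resp. right) multiplication by \<open>UT n\<close>.\<close>

definition up_closed :: "nat \<Rightarrow> (nat \<times> nat) set \<Rightarrow> bool" where
  "up_closed n P \<longleftrightarrow> (\<forall>i k j. i \<in> {1..n} \<longrightarrow> i \<le> k \<longrightarrow> k < j \<longrightarrow> (k, j) \<in> P \<longrightarrow> (i, j) \<in> P)"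

definition right_closed :: "nat \<Rightarrow> (nat \<times> nat) set \<Rightarrow> bool" where
  "right_closed n P \<longleftrightarrow> (\<forall>i k j. j \<in> {1..n} \<longrightarrow> i < k \<longrightarrow> k \<le> j \<longrightarrow> (i, k) \<in> P \<longrightarrow> (i, j) \<in> P)"

lemma up_closed_strict_upper: "up_closed n (strict_upper n)"
  by (auto simp: up_closed_def strict_upper_def)

lemma right_closed_strict_upper: "right_closed n (strict_upper n)"
  by (auto simp: right_closed_def strict_upper_def)

lemma supported_on_mmult_left:
  assumes x: "x \<in> UT n" and D: "supported_on D (strict_upper n)" "supported_on D P"
    and P: "up_closed n P"
  shows "supported_on (mmult n x D) P"
  unfolding supported_on_def
proof (intro allI impI)
  fix i j
  assume "mmult n x D i j \<noteq> 0"
  then have i: "i \<in> {1..n}" and "(\<Sum>k\<in>{1..n}. x i k * D k j) \<noteq> 0"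
    by (auto simp: mmult_def split: if_splits)
  then obtain k where "x i k * D k j \<noteq> 0"
    by (meson sum.neutral)
  then have "i \<le> k" "k < j" "(k, j) \<in> P"
    using D UT_nonzero[OF x, of i k] by (auto simp: supported_on_def strict_upper_def)
  then show "(i, j) \<in> P"
    using P i by (auto simp: up_closed_def)
qed

lemma supported_on_mmult_right:
  assumes x: "x \<in> UT n" and D: "supported_on D (strict_upper n)" "supported_on D P"
    and P: "right_closed n P"
  shows "supported_on (mmult n D x) P"
  unfolding supported_on_def
proof (intro allI impI)
  fix i j
  assume "mmult n D x i j \<noteq> 0"
  then have j: "j \<in> {1..n}" and "(\<Sum>k\<in>{1..n}. D i k * x k j) \<noteq> 0"
    by (auto simp: mmult_def split: if_splits)
  then obtain k where "D i k * x k j \<noteq> 0"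
    by (meson sum.neutral)
  then have "k \<le> j" "i < k" "(i, k) \<in> P"
    using D UT_nonzero[OF x, of k j] by (auto simp: supported_on_def strict_upper_def)
  then show "(i, j) \<in> P"
    using P j by (auto simp: right_closed_def)
qed

text \<open>The converse directions go by downward induction on the row (upward on the column): the
  diagonal of \<open>x\<close> is \<open>1\<close>, so the \<open>(i, j)\<close> entry of \<open>x D\<close> is \<open>D i j\<close> plus entries of \<open>D\<close>
  further down the same column.\<close>

lemma supported_on_mmult_left_cancel:
  assumes x: "x \<in> UT n" and D: "supported_on D ({1..n} \<times> {1..n})"
    and xD: "supported_on (mmult n x D) P"
    and closed: "\<And>i k j. i \<in> {1..n} \<Longrightarrow> i < k \<Longrightarrow> D k j \<noteq> 0 \<Longrightarrow> (k, j) \<in> P \<Longrightarrow> (i, j) \<in> P"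
  shows "supported_on D P"
proof -
  have "D i j \<noteq> 0 \<longrightarrow> (i, j) \<in> P" for i j
  proof (induction i rule: measure_induct_rule[where f = "\<lambda>i. n - i"])
    case (less i)
    show ?case
    proof (rule impI, rule ccontr)
      assume nz: "D i j \<noteq> 0" and notP: "(i, j) \<notin> P"
      then have i: "i \<in> {1..n}" and j: "j \<in> {1..n}"
        using D by (auto simp: supported_on_def)
      have "x i k * D k j = 0" if k: "k \<in> {1..n} - {i}" for k
      proof (cases "k < i")
        case True
        then show ?thesis using UT_below_diag[OF x] by simp
      next
        case False
        with k have "i < k" "n - k < n - i" by auto
        then show ?thesis using less closed[OF i] notP by auto
      qed
      then have "mmult n x D i j = x i i * D i j"
        using i j sum.mono_neutral_left[of "{1..n}" "{i}" "\<lambda>k. x i k * D k j"]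
        by (simp add: mmult_def)
      then show False
        using nz notP xD UT_diag[OF x i] by (auto simp: supported_on_def)
    qed
  qed
  then show ?thesis by (simp add: supported_on_def)
qed

lemma supported_on_mmult_right_cancel:
  assumes x: "x \<in> UT n" and D: "supported_on D ({1..n} \<times> {1..n})"
    and Dx: "supported_on (mmult n D x) P"
    and closed: "\<And>i k j. j \<in> {1..n} \<Longrightarrow> k < j \<Longrightarrow> D i k \<noteq> 0 \<Longrightarrow> (i, k) \<in> P \<Longrightarrow> (i, j) \<in> P"
  shows "supported_on D P"
proof -
  have "D i j \<noteq> 0 \<longrightarrow> (i, j) \<in> P" for i j
  proof (induction j rule: less_induct)
    case (less j)
    show ?case
    proof (rule impI, rule ccontr)
      assume nz: "D i j \<noteq> 0" and notP: "(i, j) \<notin> P"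
      then have i: "i \<in> {1..n}" and j: "j \<in> {1..n}"
        using D by (auto simp: supported_on_def)
      have "D i k * x k j = 0" if k: "k \<in> {1..n} - {j}" for k
      proof (cases "j < k")
        case True
        then show ?thesis using UT_below_diag[OF x] by simp
      next
        case False
        with k have "k < j" by auto
        then show ?thesis using less closed[OF j] notP by auto
      qed
      then have "mmult n D x i j = D i j * x j j"
        using i j sum.mono_neutral_left[of "{1..n}" "{j}" "\<lambda>k. D i k * x k j"]
        by (simp add: mmult_def)
      then show False
        using nz notP Dx UT_diag[OF x j] by (auto simp: supported_on_def)
    qed
  qed
  then show ?thesis by (simp add: supported_on_def)
qed

lemma supported_on_mmult_left_iff:
  assumes x: "x \<in> UT n" and D: "supported_on D (strict_upper n)" and P: "up_closed n P"
  shows "supported_on (mmult n x D) P \<longleftrightarrow> supported_on D P"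
proof
  assume xD: "supported_on (mmult n x D) P"
  show "supported_on D P"
  proof (rule supported_on_mmult_left_cancel[OF x _ xD])
    show "supported_on D ({1..n} \<times> {1..n})"
      using D by (rule supported_on_mono) (auto simp: strict_upper_def)
    fix i k j
    assume "i \<in> {1..n}" "i < k" "D k j \<noteq> 0" "(k, j) \<in> P"
    moreover have "k < j"
      using D \<open>D k j \<noteq> 0\<close> by (auto simp: supported_on_def strict_upper_def)
    ultimately show "(i, j) \<in> P"
      using P unfolding up_closed_def by (meson less_imp_le)
  qed
qed (rule supported_on_mmult_left[OF x D _ P])

lemma supported_on_mmult_right_iff:
  assumes x: "x \<in> UT n" and D: "supported_on D (strict_upper n)" and P: "right_closed n P"
  shows "supported_on (mmult n D x) P \<longleftrightarrow> supported_on D P"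
proof
  assume Dx: "supported_on (mmult n D x) P"
  show "supported_on D P"
  proof (rule supported_on_mmult_right_cancel[OF x _ Dx])
    show "supported_on D ({1..n} \<times> {1..n})"
      using D by (rule supported_on_mono) (auto simp: strict_upper_def)
    fix i k j
    assume "j \<in> {1..n}" "k < j" "D i k \<noteq> 0" "(i, k) \<in> P"
    moreover have "i < k"
      using D \<open>D i k \<noteq> 0\<close> by (auto simp: supported_on_def strict_upper_def)
    ultimately show "(i, j) \<in> P"
      using P by (auto simp: right_closed_def)
  qed
qed (rule supported_on_mmult_right[OF x D _ P])

lemma mmult_left_cancel:
  assumes x: "x \<in> UT n" and D: "supported_on D ({1..n} \<times> {1..n})"
    and E: "supported_on E ({1..n} \<times> {1..n})" and eq: "mmult n x D = mmult n x E"
  shows "D = E"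
proof -
  have "supported_on (mdiff D E) {}"
  proof (rule supported_on_mmult_left_cancel[OF x])
    have "D i j - E i j \<noteq> 0 \<Longrightarrow> D i j \<noteq> 0 \<or> E i j \<noteq> 0" for i j
      by auto
    then show "supported_on (mdiff D E) ({1..n} \<times> {1..n})"
      using D E unfolding supported_on_def mdiff_def by blast
    show "supported_on (mmult n x (mdiff D E)) {}"
      unfolding mmult_mdiff_right eq by (simp add: supported_on_def mdiff_def)
  qed simp
  then show ?thesis
    by (simp add: supported_on_def mdiff_def fun_eq_iff)
qed

lemma mmult_left_image_eq:
  assumes x: "x \<in> UT n" and S: "finite S" "S \<subseteq> mats_on ({1..n} \<times> {1..n})"
    and closed: "mmult n x ` S \<subseteq> S"
  shows "mmult n x ` S = S"
proof (rule endo_inj_surj[OF S(1) closed])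
  show "inj_on (mmult n x) S"
    using mmult_left_cancel[OF x] S(2) unfolding inj_on_def mats_on_def by blast
qed

subsection \<open>Pattern groups\<close>

lemma NO_subset: "\<pi> \<in> NO n \<Longrightarrow> (i, j) \<in> \<pi> \<Longrightarrow> i \<in> {1..n} \<and> j \<in> {1..n}"
  by (auto simp: NO_def)

lemma NO_le: "\<pi> \<in> NO n \<Longrightarrow> (i, j) \<in> \<pi> \<Longrightarrow> i \<le> j"
  by (auto simp: NO_def)

lemma NO_refl: "\<pi> \<in> NO n \<Longrightarrow> i \<in> {1..n} \<Longrightarrow> (i, i) \<in> \<pi>"
  by (auto simp: NO_def)

lemma NO_trans: "\<pi> \<in> NO n \<Longrightarrow> (i, j) \<in> \<pi> \<Longrightarrow> (j, k) \<in> \<pi> \<Longrightarrow> (i, k) \<in> \<pi>"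
  unfolding NO_def by (blast dest: transD)

lemma NO_widen:
  assumes "\<pi> \<in> NO n" and "(j, k) \<in> \<pi>" "j \<noteq> k"
    and "i \<in> {1..n}" "l \<in> {1..n}" "i \<le> j" "k \<le> l"
  shows "(i, l) \<in> \<pi>"
proof -
  have "\<forall>(j, k)\<in>\<pi>. j \<noteq> k \<longrightarrow> (\<forall>i\<in>{1..n}. \<forall>l\<in>{1..n}. i \<le> j \<and> k \<le> l \<longrightarrow> (i, l) \<in> \<pi>)"
    using assms(1) by (simp add: NO_def)
  from bspec[OF this assms(2)] show ?thesis
    using assms(3-) by simp
qed

lemma NO_up_closed:
  assumes \<pi>: "\<pi> \<in> NO n"
  shows "up_closed n \<pi>"
proof (unfold up_closed_def, intro allI impI)
  fix i k j
  assume "i \<in> {1..n}" "i \<le> k" "k < j" "(k, j) \<in> \<pi>"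
  then show "(i, j) \<in> \<pi>"
    using NO_widen[OF \<pi> \<open>(k, j) \<in> \<pi>\<close>] NO_subset[OF \<pi> \<open>(k, j) \<in> \<pi>\<close>] by simp
qed

lemma NO_right_closed:
  assumes \<pi>: "\<pi> \<in> NO n"
  shows "right_closed n \<pi>"
proof (unfold right_closed_def, intro allI impI)
  fix i k j
  assume "j \<in> {1..n}" "i < k" "k \<le> j" "(i, k) \<in> \<pi>"
  then show "(i, j) \<in> \<pi>"
    using NO_widen[OF \<pi> \<open>(i, k) \<in> \<pi>\<close>] NO_subset[OF \<pi> \<open>(i, k) \<in> \<pi>\<close>] by simp
qed

lemma finite_NO: "finite (NO n)"
  by (rule finite_subset[of _ "Pow ({1..n} \<times> {1..n})"]) (auto dest: NO_subset)

lemma UTpat_iff: "g \<in> UTpat n \<pi> \<longleftrightarrow> g \<in> UT n \<and> supported_on (mdiff g (idm n)) \<pi>"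
  by (auto simp: UTpat_def supported_on_def mdiff_def)

lemma UTpat_subset_UT: "UTpat n \<pi> \<subseteq> UT n"
  by (auto simp: UTpat_def)

lemma idm_in_UTpat: "idm n \<in> UTpat n \<pi>"
  by (simp add: UTpat_def idm_in_UT)

lemma finite_UT: "finite (UT n :: 'a::{finite,field} mat set)"
  by (rule finite_subset[OF _ finite_mats_on[of "{1..n} \<times> {1..n}"]])
     (use UT_supported_on in \<open>auto simp: mats_on_def\<close>)

lemma card_UTpat_pos: "card (UTpat n \<pi> :: 'a::{finite,field} mat set) > 0"
proof -
  have "finite (UTpat n \<pi> :: 'a mat set)"
    by (rule finite_subset[OF UTpat_subset_UT finite_UT])
  then show ?thesis
    using idm_in_UTpat card_gt_0_iff by blast
qed

lemma UTpat_conj_iff: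
  assumes \<pi>: "\<pi> \<in> NO n" and g: "g \<in> UT n" and x: "x \<in> UT n" and h: "h \<in> UT n"
    and conj: "mmult n g x = mmult n x h"
  shows "g \<in> UTpat n \<pi> \<longleftrightarrow> h \<in> UTpat n \<pi>"
proof -
  have "mmult n (mdiff g (idm n)) x = mmult n x (mdiff h (idm n))"
    using conj by (simp add: mmult_mdiff_idm_left[OF x] mmult_mdiff_idm_right[OF x])
  moreover have "supported_on (mmult n (mdiff g (idm n)) x) \<pi> \<longleftrightarrow> supported_on (mdiff g (idm n)) \<pi>"
    using g by (intro supported_on_mmult_right_iff[OF x _ NO_right_closed[OF \<pi>]])
      (simp add: UT_iff_mdiff_idm)
  moreover have "supported_on (mmult n x (mdiff h (idm n))) \<pi> \<longleftrightarrow> supported_on (mdiff h (idm n)) \<pi>"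
    using h by (intro supported_on_mmult_left_iff[OF x _ NO_up_closed[OF \<pi>]])
      (simp add: UT_iff_mdiff_idm)
  ultimately show ?thesis
    using g h by (simp add: UTpat_iff)
qed

lemma UT_conj_exists:
  fixes g x :: "'a::{finite,field} mat"
  assumes g: "g \<in> UT n" and x: "x \<in> UT n"
  obtains h where "h \<in> UT n" and "mmult n g x = mmult n x h"
proof -
  let ?S = "mats_on (strict_upper n) :: 'a mat set"
  have g1: "supported_on (mdiff g (idm n)) (strict_upper n)"
    using g by (simp add: UT_iff_mdiff_idm)
  have "mmult n x ` ?S = ?S"
  proof (rule mmult_left_image_eq[OF x])
    show "finite ?S"
      by (rule finite_mats_on) (simp add: finite_strict_upper)
    show "?S \<subseteq> mats_on ({1..n} \<times> {1..n})"
      by (auto simp: mats_on_def strict_upper_def elim: supported_on_mono)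
    show "mmult n x ` ?S \<subseteq> ?S"
      using supported_on_mmult_left[OF x _ _ up_closed_strict_upper] by (auto simp: mats_on_def)
  qed
  moreover have "mmult n (mdiff g (idm n)) x \<in> ?S"
    using supported_on_mmult_right[OF x g1 g1 right_closed_strict_upper] by (simp add: mats_on_def)
  ultimately obtain D where "D \<in> ?S" and xD: "mmult n x D = mmult n (mdiff g (idm n)) x"
    by (metis imageE)
  then have D: "supported_on D (strict_upper n)"
    by (simp add: mats_on_def)
  define h where "h = (\<lambda>i j. idm n i j + D i j)"
  have hD: "mdiff h (idm n) = D"
    by (simp add: h_def mdiff_def)
  have "h \<in> UT n"
    using D hD by (simp add: UT_iff_mdiff_idm)
  moreover have "mdiff (mmult n x h) x = mdiff (mmult n g x) x"
    using xD by (simp add: mmult_mdiff_idm_right[OF x, symmetric] mmult_mdiff_idm_left[OF x, symmetric] hD)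
  then have "mmult n g x = mmult n x h"
    by (simp add: mdiff_def fun_eq_iff)
  ultimately show thesis
    using that by blast
qed

lemma IndTriv_UTpat:
  fixes g :: "'a::{finite,field} mat"
  assumes \<pi>: "\<pi> \<in> NO n"
  shows "IndTriv n (UTpat n \<pi>) g
    = of_nat (card (UT n :: 'a mat set)) / of_nat (card (UTpat n \<pi> :: 'a mat set)) * delta n \<pi> g"
proof (cases "g \<in> UT n")
  case g: True
  have "(\<exists>h\<in>UTpat n \<pi>. mmult n g x = mmult n x h) \<longleftrightarrow> g \<in> UTpat n \<pi>" if x: "x \<in> UT n" for x
  proof -
    obtain h where "h \<in> UT n" and "mmult n g x = mmult n x h"
      using UT_conj_exists[OF g x] .
    then show ?thesis
      using UTpat_conj_iff[OF \<pi> g x] UTpat_subset_UT by blast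
  qed
  then have "{x \<in> UT n. \<exists>h\<in>UTpat n \<pi>. mmult n g x = mmult n x h}
      = (if g \<in> UTpat n \<pi> then UT n else {})"
    by auto
  then show ?thesis
    using g by (simp add: IndTriv_def delta_def)
qed (use UTpat_subset_UT in \<open>auto simp: IndTriv_def delta_def\<close>)

lemma delta_in_cf:
  assumes \<pi>: "\<pi> \<in> NO n"
  shows "(delta n \<pi> :: 'a::field mat \<Rightarrow> complex) \<in> cf n"
  unfolding cf_def
proof (intro CollectI conjI allI impI ballI)
  show "delta n \<pi> g = 0" if "g \<notin> UT n" for g :: "'a mat"
    using that UTpat_subset_UT by (auto simp: delta_def)
  show "delta n \<pi> g = delta n \<pi> h"
    if "g \<in> UT n" "h \<in> UT n" "x \<in> UT n" "mmult n g x = mmult n x h" for g h x :: "'a mat"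
    using UTpat_conj_iff[OF \<pi> that(1,3,2,4)] by (simp add: delta_def)
qed

lemma cspan_zero: "(\<lambda>_. 0) \<in> cspan X"
  unfolding cspan_def by (rule CollectI, rule exI[of _ "{}"]) auto

lemma cspan_superset: "s \<in> X \<Longrightarrow> s \<in> cspan X"
  unfolding cspan_def by (rule CollectI, rule exI[of _ "{s}"], rule exI[of _ "\<lambda>_. 1"]) auto

lemma cspan_scale:
  assumes "f \<in> cspan X"
  shows "(\<lambda>x. a * f x) \<in> cspan X"
proof -
  obtain S c where S: "finite S" "S \<subseteq> X" and f: "f = (\<lambda>x. \<Sum>s\<in>S. c s * s x)"
    using assms unfolding cspan_def by blast
  have "(\<lambda>x. a * f x) = (\<lambda>x. \<Sum>s\<in>S. (a * c s) * s x)"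
    by (simp add: f sum_distrib_left mult.assoc)
  then show ?thesis
    using S unfolding cspan_def by (intro CollectI exI[of _ S] exI[of _ "\<lambda>s. a * c s"]) auto
qed

lemma cspan_add:
  assumes "f \<in> cspan X" and "g \<in> cspan X"
  shows "(\<lambda>x. f x + g x) \<in> cspan X"
proof -
  obtain S c where S: "finite S" "S \<subseteq> X" and f: "f = (\<lambda>x. \<Sum>s\<in>S. c s * s x)"
    using assms(1) unfolding cspan_def by blast
  obtain T d where T: "finite T" "T \<subseteq> X" and g: "g = (\<lambda>x. \<Sum>s\<in>T. d s * s x)"
    using assms(2) unfolding cspan_def by blast
  define e where "e s = (if s \<in> S then c s else 0) + (if s \<in> T then d s else 0)" for s
  have "f x + g x = (\<Sum>s\<in>S \<union> T. e s * s x)" for x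
  proof -
    have "(\<Sum>s\<in>S \<union> T. e s * s x)
        = (\<Sum>s\<in>S \<union> T. if s \<in> S then c s * s x else 0) + (\<Sum>s\<in>S \<union> T. if s \<in> T then d s * s x else 0)"
      by (simp add: e_def distrib_right sum.distrib if_distrib[of "\<lambda>a. a * s x" for s] cong: if_cong)
    also have "\<dots> = f x + g x"
      using S T by (simp add: f g sum.inter_restrict[symmetric] Int_absorb1 Int_absorb2)
    finally show ?thesis ..
  qed
  then show ?thesis
    using S T unfolding cspan_def by (intro CollectI exI[of _ "S \<union> T"] exI[of _ e]) auto
qed

lemma cspan_sum:
  assumes "finite A" and "\<And>a. a \<in> A \<Longrightarrow> f a \<in> cspan X"
  shows "(\<lambda>x. \<Sum>a\<in>A. f a x) \<in> cspan X"
  using assms by (induction A rule: finite_induct) (simp_all add: cspan_zero cspan_add)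

lemma cspan_induct [consumes 1, case_names zero add scale base]:
  assumes f: "f \<in> cspan X"
    and zero: "P (\<lambda>_. 0)"
    and add: "\<And>f g. P f \<Longrightarrow> P g \<Longrightarrow> P (\<lambda>x. f x + g x)"
    and scale: "\<And>a f. P f \<Longrightarrow> P (\<lambda>x. a * f x)"
    and base: "\<And>s. s \<in> X \<Longrightarrow> P s"
  shows "P f"
proof -
  obtain S c where S: "finite S" "S \<subseteq> X" and f: "f = (\<lambda>x. \<Sum>s\<in>S. c s * s x)"
    using assms unfolding cspan_def by blast
  have "P (\<lambda>x. \<Sum>s\<in>S. c s * s x)"
    using S by (induction S rule: finite_induct) (simp_all add: zero add scale base)
  then show ?thesis
    by (simp add: f)
qed

lemma cspan_mono:
  assumes "X \<subseteq> cspan Y"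
  shows "cspan X \<subseteq> cspan Y"
proof
  fix f
  assume "f \<in> cspan X"
  then show "f \<in> cspan Y"
    by (induction rule: cspan_induct) (use assms in \<open>auto intro: cspan_zero cspan_add cspan_scale\<close>)
qed

lemma cspan_linear_image:
  assumes f: "f \<in> cspan X"
    and add: "\<And>f g. F (\<lambda>x. f x + g x) = (\<lambda>y. F f y + F g y)"
    and scale: "\<And>a f. F (\<lambda>x. a * f x) = (\<lambda>y. a * F f y)"
    and base: "\<And>s. s \<in> X \<Longrightarrow> F s \<in> cspan Y"
  shows "F f \<in> cspan Y"
  using f
proof (induction rule: cspan_induct)
  case zero
  have "F (\<lambda>_. 0) = (\<lambda>_. 0)"
    using scale[of 0 "\<lambda>_. 0"] by simp
  then show ?case
    by (simp add: cspan_zero)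
qed (simp_all add: add scale base cspan_add cspan_scale)

lemma scf_eq_cspan_delta:
  "(scf n :: ('a::{finite,field} mat \<Rightarrow> complex) set) = cspan (delta n ` NO n)"
proof -
  define K :: "(nat \<times> nat) set \<Rightarrow> complex" where
    "K \<pi> = of_nat (card (UT n :: 'a mat set)) / of_nat (card (UTpat n \<pi> :: 'a mat set))" for \<pi>
  have "card (UT n :: 'a mat set) > 0"
    using finite_UT idm_in_UT card_gt_0_iff by blast
  then have K: "K \<pi> \<noteq> 0" for \<pi>
    using card_UTpat_pos[of n \<pi>] by (simp add: K_def)
  have Ind: "IndTriv n (UTpat n \<pi> :: 'a mat set) = (\<lambda>g. K \<pi> * delta n \<pi> g)" if "\<pi> \<in> NO n" for \<pi>
    by (rule ext) (simp add: IndTriv_UTpat[OF that] K_def)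
  show ?thesis
    unfolding scf_def
  proof (intro equalityI cspan_mono subsetI)
    fix f :: "'a mat \<Rightarrow> complex"
    assume "f \<in> {IndTriv n (UTpat n \<pi>) |\<pi>. \<pi> \<in> NO n}"
    then obtain \<pi> where \<pi>: "\<pi> \<in> NO n" and f: "f = IndTriv n (UTpat n \<pi>)"
      by blast
    have "f = (\<lambda>g. K \<pi> * delta n \<pi> g)"
      using f Ind[OF \<pi>] by simp
    also have "\<dots> \<in> cspan (delta n ` NO n)"
      using \<pi> by (intro cspan_scale cspan_superset) simp
    finally show "f \<in> cspan (delta n ` NO n)" .
  next
    fix f :: "'a mat \<Rightarrow> complex"
    assume "f \<in> delta n ` NO n"
    then obtain \<pi> where \<pi>: "\<pi> \<in> NO n" and "f = delta n \<pi>"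
      by blast
    then have "f = (\<lambda>g. inverse (K \<pi>) * IndTriv n (UTpat n \<pi>) g)"
      using Ind K by (simp add: fun_eq_iff)
    also have "\<dots> \<in> cspan {IndTriv n (UTpat n \<pi>) |\<pi>. \<pi> \<in> NO n}"
      using \<pi> by (intro cspan_scale cspan_superset) auto
    finally show "f \<in> cspan {IndTriv n (UTpat n \<pi>) |\<pi>. \<pi> \<in> NO n}" .
  qed
qed

lemma scf_subset_cf: "(scf n :: ('a::{finite,field} mat \<Rightarrow> complex) set) \<subseteq> cf n"
proof
  fix f :: "'a mat \<Rightarrow> complex"
  assume "f \<in> scf n"
  then have "f \<in> cspan (delta n ` NO n)"
    by (simp add: scf_eq_cspan_delta)
  then show "f \<in> cf n"
  proof (induction rule: cspan_induct)
    case (base s)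
    then show ?case
      using delta_in_cf by blast
  qed (auto simp: cf_def)
qed

definition pattern_mat :: "(nat \<times> nat) set \<Rightarrow> 'a::zero_neq_one mat" where
  "pattern_mat \<sigma> = (\<lambda>i j. if (i, j) \<in> \<sigma> then 1 else 0)"

lemma pattern_mat_in_UTpat_iff:
  assumes \<sigma>: "\<sigma> \<in> NO n" and \<pi>: "\<pi> \<in> NO n"
  shows "(pattern_mat \<sigma> :: 'a::field mat) \<in> UTpat n \<pi> \<longleftrightarrow> \<sigma> \<subseteq> \<pi>"
proof -
  have "(pattern_mat \<sigma> :: 'a mat) \<in> UT n"
    unfolding UT_def pattern_mat_def
  proof (intro CollectI conjI allI impI ballI)
    show "(if (i, j) \<in> \<sigma> then 1 else 0 :: 'a) = 0" if "i \<notin> {1..n} \<or> j \<notin> {1..n}" for i j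
      using that NO_subset[OF \<sigma>, of i j] by auto
    show "(if (i, i) \<in> \<sigma> then 1 else 0 :: 'a) = 1" if "i \<in> {1..n}" for i
      using that NO_refl[OF \<sigma>] by simp
    show "(if (i, j) \<in> \<sigma> then 1 else 0 :: 'a) = 0" if "j < i" for i j :: nat
      using that NO_le[OF \<sigma>, of i j] by auto
  qed
  moreover have "(pattern_mat \<sigma> i j - idm n i j :: 'a) \<noteq> 0 \<longleftrightarrow> (i, j) \<in> \<sigma> \<and> i \<noteq> j" for i j
    using NO_refl[OF \<sigma>, of i] NO_subset[OF \<sigma>, of i j] by (auto simp: pattern_mat_def idm_def)
  moreover have "(\<forall>i j. (i, j) \<in> \<sigma> \<and> i \<noteq> j \<longrightarrow> (i, j) \<in> \<pi>) \<longleftrightarrow> \<sigma> \<subseteq> \<pi>"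
    using NO_refl[OF \<pi>] NO_subset[OF \<sigma>] by fast
  ultimately show ?thesis
    by (simp add: UTpat_def)
qed

text \<open>Evaluating a vanishing combination at the pattern matrix of a maximal \<open>\<sigma>\<close> with nonzero
  coefficient isolates that coefficient.\<close>

lemma delta_linear_independent:
  fixes c :: "(nat \<times> nat) set \<Rightarrow> complex"
  assumes zero: "\<forall>g :: 'a::{finite,field} mat. (\<Sum>\<pi>\<in>NO n. c \<pi> * delta n \<pi> g) = 0"
  shows "\<forall>\<pi>\<in>NO n. c \<pi> = 0"
proof (rule ccontr)
  assume "\<not> ?thesis"
  then have "{\<pi> \<in> NO n. c \<pi> \<noteq> 0} \<noteq> {}"
    by blast
  with finite_has_maximal[of "{\<pi> \<in> NO n. c \<pi> \<noteq> 0}"] finite_NO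
  obtain \<sigma> where \<sigma>: "\<sigma> \<in> {\<pi> \<in> NO n. c \<pi> \<noteq> 0}"
    and max: "\<And>\<pi>. \<pi> \<in> {\<pi> \<in> NO n. c \<pi> \<noteq> 0} \<Longrightarrow> \<sigma> \<le> \<pi> \<Longrightarrow> \<sigma> = \<pi>"
    by auto
  have \<sigma>N: "\<sigma> \<in> NO n" and c\<sigma>: "c \<sigma> \<noteq> 0"
    using \<sigma> by auto
  have "c \<pi> * delta n \<pi> (pattern_mat \<sigma> :: 'a mat) = (if \<pi> = \<sigma> then c \<sigma> else 0)"
    if \<pi>: "\<pi> \<in> NO n" for \<pi>
  proof (cases "\<sigma> \<subseteq> \<pi>")
    case True
    then have "\<pi> = \<sigma> \<or> c \<pi> = 0"
      using max[of \<pi>] \<pi> by auto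
    then show ?thesis
      using pattern_mat_in_UTpat_iff[OF \<sigma>N \<pi>] True by (auto simp: delta_def)
  next
    case False
    then show ?thesis
      using pattern_mat_in_UTpat_iff[OF \<sigma>N \<pi>] by (auto simp: delta_def)
  qed
  then have "(\<Sum>\<pi>\<in>NO n. c \<pi> * delta n \<pi> (pattern_mat \<sigma> :: 'a mat))
      = (\<Sum>\<pi>\<in>NO n. if \<pi> = \<sigma> then c \<sigma> else 0)"
    by (rule sum.cong[OF refl])
  also have "\<dots> = c \<sigma>"
    using \<sigma>N finite_NO by simp
  finally show False
    using zero c\<sigma> by simp
qed

lemma cano_less:
  assumes "finite I" "i \<in> I" "j \<in> I" "i < j"
  shows "cano I i < cano I j"
proof -
  have "j \<in> {k \<in> I. k \<le> j} - {k \<in> I. k \<le> i}"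
    using assms by auto
  moreover have "{k \<in> I. k \<le> i} \<subseteq> {k \<in> I. k \<le> j}"
    using assms(4) by auto
  ultimately have "{k \<in> I. k \<le> i} \<subset> {k \<in> I. k \<le> j}"
    by blast
  then show ?thesis
    unfolding cano_def using assms(1) by (intro psubset_card_mono) auto
qed

lemma cano_less_iff: "finite I \<Longrightarrow> i \<in> I \<Longrightarrow> j \<in> I \<Longrightarrow> cano I i < cano I j \<longleftrightarrow> i < j"
  using cano_less[of I i j] cano_less[of I j i] by (cases i j rule: linorder_cases) auto

lemma cano_le_iff: "finite I \<Longrightarrow> i \<in> I \<Longrightarrow> j \<in> I \<Longrightarrow> cano I i \<le> cano I j \<longleftrightarrow> i \<le> j"
  by (simp add: not_less[symmetric] cano_less_iff)

lemma inj_on_cano: "finite I \<Longrightarrow> inj_on (cano I) I"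
  by (rule inj_onI) (metis cano_less_iff less_irrefl linorder_neqE_nat)

lemma cano_in_range: "finite I \<Longrightarrow> i \<in> I \<Longrightarrow> cano I i \<in> {1..card I}"
  unfolding cano_def by (auto simp: Suc_le_eq card_gt_0_iff intro: card_mono)

lemma cano_image:
  assumes "finite I"
  shows "cano I ` I = {1..card I}"
proof (rule card_subset_eq)
  show "cano I ` I \<subseteq> {1..card I}"
    using cano_in_range[OF assms] by blast
qed (simp_all add: card_image inj_on_cano assms)

lemma decano_in: "finite I \<Longrightarrow> i \<in> {1..card I} \<Longrightarrow> decano I i \<in> I"
  unfolding decano_def using the_inv_into_into[OF inj_on_cano, of I i I] cano_image by auto

lemma cano_decano: "finite I \<Longrightarrow> i \<in> {1..card I} \<Longrightarrow> cano I (decano I i) = i"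
  unfolding decano_def using f_the_inv_into_f[OF inj_on_cano, of I i] cano_image by auto

lemma decano_cano: "finite I \<Longrightarrow> i \<in> I \<Longrightarrow> decano I (cano I i) = i"
  unfolding decano_def using the_inv_into_f_f[OF inj_on_cano] by auto

lemma decano_le_iff:
  "finite I \<Longrightarrow> i \<in> {1..card I} \<Longrightarrow> j \<in> {1..card I} \<Longrightarrow> decano I i \<le> decano I j \<longleftrightarrow> i \<le> j"
  by (metis cano_decano cano_le_iff decano_in)

lemma decano_eq_iff:
  "finite I \<Longrightarrow> i \<in> {1..card I} \<Longrightarrow> j \<in> {1..card I} \<Longrightarrow> decano I i = decano I j \<longleftrightarrow> i = j"
  by (metis cano_decano)

lemma cano_atLeastAtMost: "i \<in> {1..n} \<Longrightarrow> cano {1..n} i = i"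
proof -
  assume "i \<in> {1..n}"
  then have "{k \<in> {1..n}. k \<le> i} = {1..i}"
    by auto
  then show ?thesis
    by (simp add: cano_def)
qed

lemma decano_atLeastAtMost: "i \<in> {1..n} \<Longrightarrow> decano {1..n} i = i"
  by (metis cano_atLeastAtMost decano_cano finite_atLeastAtMost)

lemma card_atLeastAtMost_diff: "card ({1..n + m} - {1..n}) = m"
proof -
  have "{1..n + m} - {1..n} = {n + 1..n + m}"
    by auto
  then show ?thesis
    by simp
qed

lemma decano_atLeastAtMost_diff: "i \<in> {1..m} \<Longrightarrow> decano ({1..n + m} - {1..n}) i = i + n"
proof -
  assume i: "i \<in> {1..m}"
  have "{k \<in> {1..n + m} - {1..n}. k \<le> i + n} = {n + 1..i + n}"
    using i by auto
  then have "cano ({1..n + m} - {1..n}) (i + n) = i"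
    by (simp add: cano_def)
  moreover have "i + n \<in> {1..n + m} - {1..n}"
    using i by auto
  ultimately show ?thesis
    using decano_cano[of "{1..n + m} - {1..n}" "i + n"] by simp
qed

subsection \<open>The decomposition \<open>UP_I = UL_I \<ltimes> UR_I\<close>\<close>

definition block_diag :: "nat \<Rightarrow> nat set \<Rightarrow> (nat \<times> nat) set" where
  "block_diag n I = I \<times> I \<union> ({1..n} - I) \<times> ({1..n} - I)"

definition block_offdiag :: "nat \<Rightarrow> nat set \<Rightarrow> (nat \<times> nat) set" where
  "block_offdiag n I = I \<times> ({1..n} - I)"

definition block_part :: "nat set \<Rightarrow> 'a::zero mat \<Rightarrow> 'a mat" where
  "block_part I g = (\<lambda>i j. if i \<in> I \<longleftrightarrow> j \<in> I then g i j else 0)"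

lemma supported_on_Int_iff: "supported_on X (S \<inter> T) \<longleftrightarrow> supported_on X S \<and> supported_on X T"
  by (auto simp: supported_on_def)

lemma UL_iff: "l \<in> UL n I \<longleftrightarrow> supported_on (mdiff l (idm n)) (block_diag n I \<inter> strict_upper n)"
  unfolding supported_on_Int_iff UT_iff_mdiff_idm[symmetric]
  by (auto simp: UL_def supported_on_def mdiff_def block_diag_def)

lemma UR_iff: "r \<in> UR n I \<longleftrightarrow> supported_on (mdiff r (idm n)) (block_offdiag n I \<inter> strict_upper n)"
  unfolding supported_on_Int_iff UT_iff_mdiff_idm[symmetric]
  by (auto simp: UR_def supported_on_def mdiff_def block_offdiag_def)

lemma UL_subset_UT: "UL n I \<subseteq> UT n"
  by (auto simp: UL_def)

lemma UR_subset_UT: "UR n I \<subseteq> UT n"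
  by (auto simp: UR_def)

lemma UL_nonzero:
  assumes l: "l \<in> UL n I" and lik: "l i k \<noteq> 0"
  shows "i \<in> I \<longleftrightarrow> k \<in> I"
proof (cases "i = k")
  case False
  then have "mdiff l (idm n) i k \<noteq> 0"
    using lik by (simp add: mdiff_def idm_def)
  then have "(i, k) \<in> block_diag n I"
    using l unfolding UL_iff supported_on_def by blast
  then show ?thesis
    by (auto simp: block_diag_def)
qed simp

lemma supported_on_mmult_UL_block_offdiag:
  assumes l: "l \<in> UL n I" and X: "supported_on X (block_offdiag n I)"
  shows "supported_on (mmult n l X) (block_offdiag n I)"
  unfolding supported_on_def
proof (intro allI impI)
  fix i j
  assume "mmult n l X i j \<noteq> 0"
  then have "(\<Sum>k\<in>{1..n}. l i k * X k j) \<noteq> 0"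
    by (auto simp: mmult_def split: if_splits)
  then obtain k where "l i k * X k j \<noteq> 0"
    by (meson sum.neutral)
  then show "(i, j) \<in> block_offdiag n I"
    using X UL_nonzero[OF l] by (auto simp: supported_on_def block_offdiag_def)
qed

lemma block_part_in_UL:
  assumes g: "g \<in> UT n"
  shows "block_part I g \<in> UL n I"
  unfolding UL_iff supported_on_def
proof (intro allI impI)
  fix i j
  assume nz: "mdiff (block_part I g) (idm n) i j \<noteq> 0"
  show "(i, j) \<in> block_diag n I \<inter> strict_upper n"
  proof (cases "i \<in> I \<longleftrightarrow> j \<in> I")
    case True
    then have "(i, j) \<in> strict_upper n"
      using nz g by (auto simp: UT_iff_mdiff_idm supported_on_def mdiff_def block_part_def)
    then show ?thesis
      using True by (auto simp: block_diag_def strict_upper_def)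
  next
    case False
    then have "i \<noteq> j"
      by auto
    then show ?thesis
      using nz False by (simp add: mdiff_def block_part_def idm_def)
  qed
qed

lemma UL_UR_factor_unique:
  assumes l: "l \<in> UL n I" and r: "r \<in> UR n I"
  shows "block_part I (mmult n l r) = l"
proof (intro ext)
  fix i j
  have "supported_on (mmult n l (mdiff r (idm n))) (block_offdiag n I)"
    using r by (intro supported_on_mmult_UL_block_offdiag[OF l]) (simp add: UR_iff supported_on_Int_iff)
  then have "mmult n l (mdiff r (idm n)) i j = 0" if "i \<in> I \<longleftrightarrow> j \<in> I"
    using that unfolding supported_on_def block_offdiag_def by blast
  then have "(i \<in> I \<longleftrightarrow> j \<in> I) \<Longrightarrow> mmult n l r i j = l i j"
    using mmult_eq_add_mmult_mdiff_idm[of l n r i j] l UL_subset_UT by auto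
  then show "block_part I (mmult n l r) i j = l i j"
    using UL_nonzero[OF l, of i j] by (auto simp: block_part_def)
qed

text \<open>Left multiplication by \<open>l\<close> is injective and preserves the finite space of matrices
  supported on the strictly upper part of the off-diagonal block, hence is onto it.\<close>

lemma UL_mmult_onto_block_offdiag:
  fixes l :: "'a::{finite,field} mat"
  assumes l: "l \<in> UL n I" and C: "supported_on C (block_offdiag n I \<inter> strict_upper n)"
  obtains X where "supported_on X (block_offdiag n I \<inter> strict_upper n)" and "mmult n l X = C"
proof -
  let ?S = "mats_on (block_offdiag n I \<inter> strict_upper n) :: 'a mat set"
  have lU: "l \<in> UT n"
    using l UL_subset_UT by blast
  have "mmult n l ` ?S = ?S"
  proof (rule mmult_left_image_eq[OF lU])
    show "finite ?S"
      using finite_strict_upper by (intro finite_mats_on) blast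
    show "?S \<subseteq> mats_on ({1..n} \<times> {1..n})"
      by (auto simp: mats_on_def strict_upper_def elim: supported_on_mono)
    show "mmult n l ` ?S \<subseteq> ?S"
      using supported_on_mmult_left[OF lU _ _ up_closed_strict_upper]
        supported_on_mmult_UL_block_offdiag[OF l]
      by (auto simp: mats_on_def supported_on_Int_iff)
  qed
  moreover have "C \<in> ?S"
    using C by (simp add: mats_on_def)
  ultimately obtain X where "X \<in> ?S" and "mmult n l X = C"
    by (metis imageE)
  then show thesis
    using that by (simp add: mats_on_def)
qed

lemma UP_factorization:
  fixes g :: "'a::{finite,field} mat"
  assumes g: "g \<in> UP n I"
  shows "\<exists>r\<in>UR n I. g = mmult n (block_part I g) r"
proof -
  let ?L = "block_part I g"
  define C where "C = (\<lambda>i j. if i \<in> I \<and> j \<notin> I then g i j else 0)"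
  have gU: "g \<in> UT n"
    using g by (simp add: UP_def)
  have L: "?L \<in> UL n I" "?L \<in> UT n"
    using block_part_in_UL[OF gU] UL_subset_UT by auto
  have "(i, j) \<in> block_offdiag n I \<inter> strict_upper n" if "C i j \<noteq> 0" for i j
    using that UT_nonzero[OF gU, of i j]
    by (cases "i = j") (auto simp: C_def block_offdiag_def strict_upper_def split: if_splits)
  then have "supported_on C (block_offdiag n I \<inter> strict_upper n)"
    by (simp add: supported_on_def)
  then obtain X where X: "supported_on X (block_offdiag n I \<inter> strict_upper n)"
    and LX: "mmult n ?L X = C"
    using UL_mmult_onto_block_offdiag[OF L(1)] by blast
  define r where "r = (\<lambda>i j. idm n i j + X i j)"
  have rX: "mdiff r (idm n) = X"
    by (simp add: r_def mdiff_def)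
  have "g i j = 0" if ij: "i \<notin> I" "j \<in> I" for i j
  proof (cases "i \<in> {1..n} \<and> j \<in> {1..n}")
    case True
    then have "g i j - idm n i j = 0"
      using g ij unfolding UP_def by blast
    moreover have "idm n i j = 0"
      using ij by (auto simp: idm_def)
    ultimately show ?thesis
      by simp
  qed (use UT_out[OF gU] in blast)
  moreover have "mmult n ?L r i j = ?L i j + C i j" for i j
    using mmult_eq_add_mmult_mdiff_idm[OF L(2), of r i j] by (simp add: rX LX)
  ultimately have "mmult n ?L r = g"
    by (auto simp: C_def block_part_def fun_eq_iff)
  moreover have "r \<in> UR n I"
    using X rX by (simp add: UR_iff)
  ultimately show ?thesis
    by (intro bexI[of _ r]) simp_all
qed

lemma UP_factor_THE:
  fixes g :: "'a::{finite,field} mat"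
  assumes "g \<in> UP n I"
  shows "(THE l. l \<in> UL n I \<and> (\<exists>r\<in>UR n I. g = mmult n l r)) = block_part I g"
proof (rule the_equality)
  show "block_part I g \<in> UL n I \<and> (\<exists>r\<in>UR n I. g = mmult n (block_part I g) r)"
    using assms UP_factorization block_part_in_UL by (auto simp: UP_def)
next
  fix l
  assume "l \<in> UL n I \<and> (\<exists>r\<in>UR n I. g = mmult n l r)"
  then obtain r where "l \<in> UL n I" "r \<in> UR n I" "g = mmult n l r"
    by blast
  then show "l = block_part I g"
    using UL_UR_factor_unique[of l n I r] by simp
qed

lemma ostar_iff:
  assumes \<rho>: "\<rho> \<in> NO m"
  shows "(i, j) \<in> ostar n m \<pi> \<rho> \<longleftrightarrow>
    (i, j) \<in> \<pi> \<or> (n < i \<and> n < j \<and> (i - n, j - n) \<in> \<rho>) \<or> (i \<in> {1..n} \<and> n < j \<and> j \<le> n + m)"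
proof -
  have "(i, j) \<in> {(a + n, b + n) | a b. (a, b) \<in> \<rho>} \<longleftrightarrow> n < i \<and> n < j \<and> (i - n, j - n) \<in> \<rho>"
  proof
    assume "(i, j) \<in> {(a + n, b + n) | a b. (a, b) \<in> \<rho>}"
    then obtain a b where "i = a + n" "j = b + n" "(a, b) \<in> \<rho>"
      by blast
    moreover from this have "a \<ge> 1" "b \<ge> 1"
      using NO_subset[OF \<rho>] by auto
    ultimately show "n < i \<and> n < j \<and> (i - n, j - n) \<in> \<rho>"
      by simp
  next
    assume "n < i \<and> n < j \<and> (i - n, j - n) \<in> \<rho>"
    then show "(i, j) \<in> {(a + n, b + n) | a b. (a, b) \<in> \<rho>}"
      by (intro CollectI exI[of _ "i - n"] exI[of _ "j - n"]) auto
  qed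
  then show ?thesis
    unfolding ostar_def by auto
qed

lemma ostar_cases [consumes 3, case_names left right across]:
  assumes \<pi>: "\<pi> \<in> NO n" and \<rho>: "\<rho> \<in> NO m" and ij: "(i, j) \<in> ostar n m \<pi> \<rho>"
  obtains (left) "(i, j) \<in> \<pi>" "i \<in> {1..n}" "j \<in> {1..n}" "i \<le> j"
    | (right) "n < i" "n < j" "(i - n, j - n) \<in> \<rho>" "i - n \<in> {1..m}" "j - n \<in> {1..m}" "i \<le> j"
    | (across) "i \<in> {1..n}" "n < j" "j \<le> n + m"
proof -
  consider "(i, j) \<in> \<pi>" | "n < i" "n < j" "(i - n, j - n) \<in> \<rho>" | "i \<in> {1..n}" "n < j" "j \<le> n + m"
    using ij unfolding ostar_iff[OF \<rho>] by blast
  then show thesis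
  proof cases
    case 1
    then show thesis
      using left NO_subset[OF \<pi> 1] NO_le[OF \<pi> 1] by blast
  next
    case 2
    then have "i \<le> j"
      using NO_le[OF \<rho> 2(3)] by arith
    then show thesis
      using right 2 NO_subset[OF \<rho> 2(3)] by blast
  qed (rule across)
qed

lemma ostar_leftI: "(i, j) \<in> \<pi> \<Longrightarrow> (i, j) \<in> ostar n m \<pi> \<rho>"
  by (simp add: ostar_def)

lemma ostar_rightI:
  assumes "n < i" "n < j" "(i - n, j - n) \<in> \<rho>"
  shows "(i, j) \<in> ostar n m \<pi> \<rho>"
proof -
  have "(i, j) = (i - n + n, j - n + n)"
    using assms(1,2) by simp
  then show ?thesis
    using assms(3) unfolding ostar_def by blast
qed

lemma ostar_acrossI: "i \<in> {1..n} \<Longrightarrow> n < j \<Longrightarrow> j \<le> n + m \<Longrightarrow> (i, j) \<in> ostar n m \<pi> \<rho>"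
  by (simp add: ostar_def)

lemma ostar_refl:
  assumes \<pi>: "\<pi> \<in> NO n" and \<rho>: "\<rho> \<in> NO m" and i: "i \<in> {1..n + m}"
  shows "(i, i) \<in> ostar n m \<pi> \<rho>"
proof (cases "i \<le> n")
  case True
  then show ?thesis
    using i NO_refl[OF \<pi>, of i] ostar_leftI by simp
next
  case False
  then have "i - n \<in> {1..m}"
    using i by auto
  then show ?thesis
    using False NO_refl[OF \<rho>] ostar_rightI[of n i i] by simp
qed

lemma ostar_trans:
  assumes \<pi>: "\<pi> \<in> NO n" and \<rho>: "\<rho> \<in> NO m"
    and ij: "(i, j) \<in> ostar n m \<pi> \<rho>" and jk: "(j, k) \<in> ostar n m \<pi> \<rho>"
  shows "(i, k) \<in> ostar n m \<pi> \<rho>"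
  using \<pi> \<rho> ij
proof (cases rule: ostar_cases)
  case ij': left
  from \<pi> \<rho> jk show ?thesis
  proof (cases rule: ostar_cases)
    case left
    then show ?thesis using ij' NO_trans[OF \<pi>] ostar_leftI by blast
  next
    case across
    then show ?thesis using ij' ostar_acrossI by blast
  qed (use ij' in simp)
next
  case ij': right
  from \<pi> \<rho> jk show ?thesis
  proof (cases rule: ostar_cases)
    case right
    then show ?thesis using ij' NO_trans[OF \<rho>] ostar_rightI by blast
  qed (use ij' in simp_all)
next
  case ij': across
  from \<pi> \<rho> jk show ?thesis
  proof (cases rule: ostar_cases)
    case right
    then show ?thesis using ij' ostar_acrossI by auto
  qed (use ij' in simp_all)
qed

lemma ostar_widen:
  assumes \<pi>: "\<pi> \<in> NO n" and \<rho>: "\<rho> \<in> NO m"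
    and jk: "(j, k) \<in> ostar n m \<pi> \<rho>" "j \<noteq> k"
    and il: "i \<in> {1..n + m}" "l \<in> {1..n + m}" "i \<le> j" "k \<le> l"
  shows "(i, l) \<in> ostar n m \<pi> \<rho>"
  using \<pi> \<rho> jk(1)
proof (cases rule: ostar_cases)
  case left
  then show ?thesis
    using NO_widen[OF \<pi> left(1) jk(2)] il ostar_acrossI[of i n l] ostar_leftI[of i l]
    by (cases "l \<le> n") auto
next
  case jk': right
  show ?thesis
  proof (cases "i \<le> n")
    case False
    have "(i - n, l - n) \<in> \<rho>"
      by (rule NO_widen[OF \<rho> jk'(3)]) (use jk False il jk' in auto)
    then show ?thesis
      using ostar_rightI False jk' il by auto
  qed (use ostar_acrossI il jk' in auto)
next
  case across
  then show ?thesis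
    using il by (intro ostar_acrossI) auto
qed

lemma ostar_NO:
  assumes \<pi>: "\<pi> \<in> NO n" and \<rho>: "\<rho> \<in> NO m"
  shows "ostar n m \<pi> \<rho> \<in> NO (n + m)"
proof -
  have ordered: "(i, j) \<in> ostar n m \<pi> \<rho> \<Longrightarrow> i \<le> j" for i j
    by (erule ostar_cases[OF \<pi> \<rho>]) auto
  have in_square: "(i, j) \<in> ostar n m \<pi> \<rho> \<Longrightarrow> i \<in> {1..n + m} \<and> j \<in> {1..n + m}" for i j
    by (erule ostar_cases[OF \<pi> \<rho>]) auto
  show ?thesis
    unfolding NO_def
  proof (intro CollectI conjI)
    show "ostar n m \<pi> \<rho> \<subseteq> {1..n + m} \<times> {1..n + m}"
      using in_square by auto
    show "\<forall>i\<in>{1..n + m}. (i, i) \<in> ostar n m \<pi> \<rho>"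
      using ostar_refl[OF \<pi> \<rho>] by blast
    show "antisym (ostar n m \<pi> \<rho>)"
      by (meson antisymI ordered order_antisym)
    show "trans (ostar n m \<pi> \<rho>)"
      by (rule transI) (rule ostar_trans[OF \<pi> \<rho>])
    show "\<forall>(i, j)\<in>ostar n m \<pi> \<rho>. i \<le> j"
      using ordered by auto
    show "\<forall>(j, k)\<in>ostar n m \<pi> \<rho>. j \<noteq> k \<longrightarrow>
        (\<forall>i\<in>{1..n + m}. \<forall>l\<in>{1..n + m}. i \<le> j \<and> k \<le> l \<longrightarrow> (i, l) \<in> ostar n m \<pi> \<rho>)"
      using ostar_widen[OF \<pi> \<rho>] by blast
  qed
qed

subsection \<open>The product\<close>

definition upper_block :: "nat \<Rightarrow> 'a::zero mat \<Rightarrow> 'a mat" where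
  "upper_block n g = (\<lambda>i j. if i \<in> {1..n} \<and> j \<in> {1..n} then g i j else 0)"

definition lower_block :: "nat \<Rightarrow> nat \<Rightarrow> 'a::zero mat \<Rightarrow> 'a mat" where
  "lower_block n m g = (\<lambda>i j. if i \<in> {1..m} \<and> j \<in> {1..m} then g (i + n) (j + n) else 0)"

lemma UT_subset_UP_atLeastAtMost: "UT N \<subseteq> UP N {1..n}"
  by (auto simp: UP_def idm_def intro: UT_below_diag)

lemma mu_eq:
  fixes g :: "'a::{finite,field} mat"
  shows "mu n m f h g = (if g \<in> UT (n + m) then f (upper_block n g) * h (lower_block n m g) else 0)"
proof (cases "g \<in> UT (n + m)")
  case True
  then have "(THE l. l \<in> UL (n + m) {1..n} \<and> (\<exists>r\<in>UR (n + m) {1..n}. g = mmult (n + m) l r))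
      = block_part {1..n} g"
    using UT_subset_UP_atLeastAtMost by (intro UP_factor_THE) blast
  moreover have "sub {1..n} (block_part {1..n} g) = upper_block n g"
  proof (intro ext)
    fix i j
    show "sub {1..n} (block_part {1..n} g) i j = upper_block n g i j"
      using decano_atLeastAtMost[of i n] decano_atLeastAtMost[of j n]
      by (cases "i \<in> {1..n} \<and> j \<in> {1..n}") (auto simp: sub_def block_part_def upper_block_def)
  qed
  moreover have "sub ({1..n + m} - {1..n}) (block_part {1..n} g) = lower_block n m g"
  proof (intro ext)
    fix i j
    show "sub ({1..n + m} - {1..n}) (block_part {1..n} g) i j = lower_block n m g i j"
      using decano_atLeastAtMost_diff[of i m n] decano_atLeastAtMost_diff[of j m n]
        card_atLeastAtMost_diff[of n m]
      by (cases "i \<in> {1..m} \<and> j \<in> {1..m}") (auto simp: sub_def block_part_def lower_block_def)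
  qed
  ultimately show ?thesis
    using True by (simp add: mu_def Infl_def)
qed (simp add: mu_def Infl_def)

lemma upper_block_in_UT: "g \<in> UT (n + m) \<Longrightarrow> upper_block n g \<in> UT n"
  by (auto simp: UT_def upper_block_def)

lemma lower_block_in_UT: "g \<in> UT (n + m) \<Longrightarrow> lower_block n m g \<in> UT m"
  by (auto simp: UT_def lower_block_def)

lemma upper_block_in_UTpat_iff:
  assumes "g \<in> UT (n + m)"
  shows "upper_block n g \<in> UTpat n \<pi>
    \<longleftrightarrow> (\<forall>i\<in>{1..n}. \<forall>j\<in>{1..n}. g i j - idm (n + m) i j \<noteq> 0 \<longrightarrow> (i, j) \<in> \<pi>)"
  using upper_block_in_UT[OF assms] by (auto simp: UTpat_def upper_block_def idm_def)

lemma lower_block_in_UTpat_iff: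
  assumes "g \<in> UT (n + m)"
  shows "lower_block n m g \<in> UTpat m \<rho>
    \<longleftrightarrow> (\<forall>i\<in>{1..m}. \<forall>j\<in>{1..m}. g (i + n) (j + n) - idm (n + m) (i + n) (j + n) \<noteq> 0 \<longrightarrow> (i, j) \<in> \<rho>)"
  using lower_block_in_UT[OF assms] by (auto simp: UTpat_def lower_block_def idm_def)

lemma UTpat_ostar_iff:
  fixes g :: "'a::field mat"
  assumes \<pi>: "\<pi> \<in> NO n" and \<rho>: "\<rho> \<in> NO m" and g: "g \<in> UT (n + m)"
  shows "g \<in> UTpat (n + m) (ostar n m \<pi> \<rho>)
    \<longleftrightarrow> upper_block n g \<in> UTpat n \<pi> \<and> lower_block n m g \<in> UTpat m \<rho>"
proof -
  let ?nz = "\<lambda>i j. g i j - idm (n + m) i j \<noteq> 0"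
  note upper = upper_block_in_UTpat_iff[OF g, of \<pi>]
  note lower = lower_block_in_UTpat_iff[OF g, of \<rho>]
  have nz: "i \<in> {1..n + m} \<and> j \<in> {1..n + m} \<and> i < j" if "?nz i j" for i j
    using that g by (auto simp: UT_iff_mdiff_idm supported_on_def mdiff_def strict_upper_def)
  show ?thesis
  proof
    assume "g \<in> UTpat (n + m) (ostar n m \<pi> \<rho>)"
    then have in_ostar: "?nz i j \<Longrightarrow> (i, j) \<in> ostar n m \<pi> \<rho>" for i j
      by (simp add: UTpat_def)
    have "upper_block n g \<in> UTpat n \<pi>"
      unfolding upper
    proof (intro ballI impI)
      fix i j
      assume "i \<in> {1..n}" "j \<in> {1..n}" "?nz i j"
      then show "(i, j) \<in> \<pi>"
        using in_ostar[of i j] unfolding ostar_iff[OF \<rho>] by auto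
    qed
    moreover have "lower_block n m g \<in> UTpat m \<rho>"
      unfolding lower
    proof (intro ballI impI)
      fix i j
      assume "i \<in> {1..m}" "j \<in> {1..m}" "?nz (i + n) (j + n)"
      moreover have "(i + n, j + n) \<notin> \<pi>"
        using NO_subset[OF \<pi>, of "i + n" "j + n"] \<open>i \<in> {1..m}\<close> by auto
      ultimately show "(i, j) \<in> \<rho>"
        using in_ostar[of "i + n" "j + n"] unfolding ostar_iff[OF \<rho>] by auto
    qed
    ultimately show "upper_block n g \<in> UTpat n \<pi> \<and> lower_block n m g \<in> UTpat m \<rho>" ..
  next
    assume blocks: "upper_block n g \<in> UTpat n \<pi> \<and> lower_block n m g \<in> UTpat m \<rho>"
    have "(i, j) \<in> ostar n m \<pi> \<rho>" if "?nz i j" for i j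
    proof -
      consider "j \<le> n" | "i \<le> n" "n < j" | "n < i"
        by linarith
      then show ?thesis
      proof cases
        case 1
        then show ?thesis
          using blocks nz[OF that] that unfolding upper ostar_iff[OF \<rho>] by auto
      next
        case 2
        then show ?thesis
          using nz[OF that] unfolding ostar_iff[OF \<rho>] by auto
      next
        case 3
        then have "i - n \<in> {1..m}" "j - n \<in> {1..m}" "?nz (i - n + n) (j - n + n)"
          using nz[OF that] that by auto
        then have "(i - n, j - n) \<in> \<rho>"
          using blocks unfolding lower by blast
        then show ?thesis
          using 3 nz[OF that] unfolding ostar_iff[OF \<rho>] by auto
      qed
    qed
    then show "g \<in> UTpat (n + m) (ostar n m \<pi> \<rho>)"
      using g by (simp add: UTpat_def)
  qed
qed

lemma mu_delta:
  assumes \<pi>: "\<pi> \<in> NO n" and \<rho>: "\<rho> \<in> NO m"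
  shows "mu n m (delta n \<pi>) (delta m \<rho>) = (delta (n + m) (ostar n m \<pi> \<rho>) :: 'a::{finite,field} mat \<Rightarrow> complex)"
proof
  fix g :: "'a mat"
  show "mu n m (delta n \<pi>) (delta m \<rho>) g = delta (n + m) (ostar n m \<pi> \<rho>) g"
    using UTpat_ostar_iff[OF \<pi> \<rho>, of g] UTpat_subset_UT by (auto simp: mu_eq delta_def)
qed

lemma mu_in_scf:
  fixes f h :: "'a::{finite,field} mat \<Rightarrow> complex"
  assumes f: "f \<in> scf n" and h: "h \<in> scf m"
  shows "mu n m f h \<in> scf (n + m)"
proof -
  let ?B = "\<lambda>k. delta k ` NO k :: ('a mat \<Rightarrow> complex) set"
  have "mu n m (delta n \<pi>) h \<in> cspan (?B (n + m))" if \<pi>: "\<pi> \<in> NO n" for \<pi>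
  proof (rule cspan_linear_image[where F = "mu n m (delta n \<pi>)"])
    show "h \<in> cspan (?B m)"
      using h by (simp add: scf_eq_cspan_delta)
    show "mu n m (delta n \<pi>) t \<in> cspan (?B (n + m))" if "t \<in> ?B m" for t
      using that \<pi> by (auto simp: mu_delta ostar_NO intro: cspan_superset)
  qed (simp_all add: mu_eq fun_eq_iff distrib_left)
  then show ?thesis
    using f unfolding scf_eq_cspan_delta
    by (elim cspan_linear_image[where F = "\<lambda>f. mu n m f h"]) (auto simp: mu_eq fun_eq_iff distrib_right)
qed

lemma shres_iff:
  assumes J: "finite J"
  shows "(i', j') \<in> shres J \<pi>
    \<longleftrightarrow> i' \<in> {1..card J} \<and> j' \<in> {1..card J} \<and> (decano J i', decano J j') \<in> \<pi>"
proof
  assume "(i', j') \<in> shres J \<pi>"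
  then obtain i j where "i' = cano J i" "j' = cano J j" "(i, j) \<in> \<pi>" "i \<in> J" "j \<in> J"
    unfolding shres_def by blast
  then show "i' \<in> {1..card J} \<and> j' \<in> {1..card J} \<and> (decano J i', decano J j') \<in> \<pi>"
    using cano_in_range[OF J] decano_cano[OF J] by simp
next
  assume "i' \<in> {1..card J} \<and> j' \<in> {1..card J} \<and> (decano J i', decano J j') \<in> \<pi>"
  then show "(i', j') \<in> shres J \<pi>"
    unfolding shres_def using cano_decano[OF J] decano_in[OF J]
    by (intro CollectI exI[of _ "decano J i'"] exI[of _ "decano J j'"]) simp
qed

lemma cano_in_shres_iff:
  "finite J \<Longrightarrow> i \<in> J \<Longrightarrow> j \<in> J \<Longrightarrow> (cano J i, cano J j) \<in> shres J \<pi> \<longleftrightarrow> (i, j) \<in> \<pi>"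
  using cano_in_range[of J i] cano_in_range[of J j] by (simp add: shres_iff decano_cano)

lemma shres_NO:
  assumes \<pi>: "\<pi> \<in> NO n" and J: "J \<subseteq> {1..n}"
  shows "shres J \<pi> \<in> NO (card J)"
proof -
  have fin: "finite J"
    using J by (rule finite_subset) simp
  note mem = shres_iff[OF fin]
  have dJ: "decano J i \<in> {1..n}" if "i \<in> {1..card J}" for i
    using decano_in[OF fin that] J by blast
  have le: "i \<le> j" if "(i, j) \<in> shres J \<pi>" for i j
    using mem[of i j] that NO_le[OF \<pi>] decano_le_iff[OF fin, of i j] by auto
  have widen: "(i, l) \<in> shres J \<pi>"
    if jk: "(j, k) \<in> shres J \<pi>" "j \<noteq> k" and il: "i \<in> {1..card J}" "l \<in> {1..card J}" "i \<le> j" "k \<le> l"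
    for i j k l
  proof -
    have j: "j \<in> {1..card J}" and k: "k \<in> {1..card J}" and "(decano J j, decano J k) \<in> \<pi>"
      using mem jk by auto
    then have "(decano J i, decano J l) \<in> \<pi>"
      using NO_widen[OF \<pi>] dJ il jk(2) decano_eq_iff[OF fin j k]
        decano_le_iff[OF fin il(1) j] decano_le_iff[OF fin k il(2)] by simp
    then show ?thesis
      using mem il by simp
  qed
  show ?thesis
    unfolding NO_def
  proof (intro CollectI conjI)
    show "shres J \<pi> \<subseteq> {1..card J} \<times> {1..card J}"
      using mem by auto
    show "\<forall>i\<in>{1..card J}. (i, i) \<in> shres J \<pi>"
      using mem NO_refl[OF \<pi>] dJ by auto
    show "antisym (shres J \<pi>)"
      by (meson antisymI le order_antisym)
    show "trans (shres J \<pi>)"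
      by (rule transI) (use mem NO_trans[OF \<pi>] in auto)
    show "\<forall>(i, j)\<in>shres J \<pi>. i \<le> j"
      using le by auto
    show "\<forall>(j, k)\<in>shres J \<pi>. j \<noteq> k \<longrightarrow>
        (\<forall>i\<in>{1..card J}. \<forall>l\<in>{1..card J}. i \<le> j \<and> k \<le> l \<longrightarrow> (i, l) \<in> shres J \<pi>)"
      using widen by blast
  qed
qed

lemma idm_cano:
  assumes "J \<subseteq> {1..n}" "i \<in> J" "j \<in> J"
  shows "idm (card J) (cano J i) (cano J j) = idm n i j"
proof -
  have fin: "finite J"
    using assms(1) by (rule finite_subset) simp
  then have "cano J i = cano J j \<longleftrightarrow> i = j"
    using inj_on_cano[OF fin] assms(2,3) by (meson inj_onD)
  moreover have "cano J i \<in> {1..card J}" "i \<in> {1..n}"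
    using cano_in_range[OF fin assms(2)] assms(1,2) by auto
  ultimately show ?thesis
    by (simp add: idm_def)
qed

lemma UTpat_shres_iff:
  assumes J: "J \<subseteq> {1..n}" and c: "c \<in> UT (card J)"
  shows "c \<in> UTpat (card J) (shres J \<pi>)
    \<longleftrightarrow> (\<forall>i\<in>J. \<forall>j\<in>J. c (cano J i) (cano J j) - idm n i j \<noteq> 0 \<longrightarrow> (i, j) \<in> \<pi>)"
proof -
  have fin: "finite J"
    using J by (rule finite_subset) simp
  have "i' \<in> cano J ` J \<and> j' \<in> cano J ` J" if "c i' j' - idm (card J) i' j' \<noteq> 0" for i' j'
    using that c cano_image[OF fin]
    by (auto simp: UT_iff_mdiff_idm supported_on_def mdiff_def strict_upper_def)
  then have "c \<in> UTpat (card J) (shres J \<pi>) \<longleftrightarrow>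
      (\<forall>i\<in>J. \<forall>j\<in>J. c (cano J i) (cano J j) - idm (card J) (cano J i) (cano J j) \<noteq> 0
        \<longrightarrow> (cano J i, cano J j) \<in> shres J \<pi>)"
    using c unfolding UTpat_def by blast
  then show ?thesis
    by (simp add: idm_cano[OF J] cano_in_shres_iff[OF fin])
qed

lemma glue_in_UL:
  assumes I: "I \<subseteq> {1..n}" and a: "a \<in> UT (card I)" and b: "b \<in> UT (card ({1..n} - I))"
  shows "glue n I a b \<in> UL n I"
proof -
  have upper: "(i, j) \<in> strict_upper n"
    if J: "J \<subseteq> {1..n}" and c: "c \<in> UT (card J)" and ij: "i \<in> J" "j \<in> J"
      and nz: "c (cano J i) (cano J j) - idm n i j \<noteq> 0" for J c i j
  proof -
    have fin: "finite J"
      using J by (rule finite_subset) simp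
    have "cano J i < cano J j"
      using c nz unfolding idm_cano[OF J ij, symmetric]
      by (auto simp: UT_iff_mdiff_idm supported_on_def mdiff_def strict_upper_def)
    then show ?thesis
      using cano_less_iff[OF fin ij] ij J by (auto simp: strict_upper_def)
  qed
  show ?thesis
    unfolding UL_iff supported_on_def
  proof (intro allI impI)
    fix i j
    assume nz: "mdiff (glue n I a b) (idm n) i j \<noteq> 0"
    consider "i \<in> I" "j \<in> I" | "i \<in> {1..n} - I" "j \<in> {1..n} - I"
      | "\<not> (i \<in> I \<and> j \<in> I)" "\<not> (i \<in> {1..n} - I \<and> j \<in> {1..n} - I)"
      by blast
    then show "(i, j) \<in> block_diag n I \<inter> strict_upper n"
    proof cases
      case 1
      then show ?thesis
        using upper[OF I a] nz by (simp add: mdiff_def glue_def block_diag_def)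
    next
      case 2
      then show ?thesis
        using upper[OF _ b] nz by (simp add: mdiff_def glue_def block_diag_def)
    next
      case 3
      then show ?thesis
        using nz by (auto simp: mdiff_def glue_def idm_def split: if_splits)
    qed
  qed
qed

lemma glue_in_UTpat_iff:
  assumes I: "I \<subseteq> {1..n}" and a: "a \<in> UT (card I)" and b: "b \<in> UT (card ({1..n} - I))"
  shows "glue n I a b \<in> UTpat n \<pi>
    \<longleftrightarrow> a \<in> UTpat (card I) (shres I \<pi>) \<and> b \<in> UTpat (card ({1..n} - I)) (shres ({1..n} - I) \<pi>)"
proof -
  let ?g = "glue n I a b"
  have g: "?g \<in> UL n I"
    by (rule glue_in_UL[OF I a b])
  then have "?g i j - idm n i j \<noteq> 0 \<Longrightarrow> (i, j) \<in> block_diag n I" for i j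
    by (auto simp: UL_iff supported_on_def mdiff_def)
  then have "?g \<in> UTpat n \<pi> \<longleftrightarrow>
      (\<forall>i\<in>I. \<forall>j\<in>I. ?g i j - idm n i j \<noteq> 0 \<longrightarrow> (i, j) \<in> \<pi>) \<and>
      (\<forall>i\<in>{1..n} - I. \<forall>j\<in>{1..n} - I. ?g i j - idm n i j \<noteq> 0 \<longrightarrow> (i, j) \<in> \<pi>)"
    using g UL_subset_UT unfolding UTpat_def block_diag_def by blast
  also have "(\<forall>i\<in>I. \<forall>j\<in>I. ?g i j - idm n i j \<noteq> 0 \<longrightarrow> (i, j) \<in> \<pi>)
      \<longleftrightarrow> a \<in> UTpat (card I) (shres I \<pi>)"
    unfolding UTpat_shres_iff[OF I a] by (intro ball_cong refl) (simp add: glue_def)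
  also have "(\<forall>i\<in>{1..n} - I. \<forall>j\<in>{1..n} - I. ?g i j - idm n i j \<noteq> 0 \<longrightarrow> (i, j) \<in> \<pi>)
      \<longleftrightarrow> b \<in> UTpat (card ({1..n} - I)) (shres ({1..n} - I) \<pi>)"
    unfolding UTpat_shres_iff[OF Diff_subset b] by (intro ball_cong refl) (simp add: glue_def)
  finally show ?thesis .
qed

subsection \<open>The coproduct\<close>

lemma card_mdiff_idm_supported_on:
  assumes "finite S"
  shows "card {x :: 'a::{finite,field} mat. supported_on (mdiff x (idm n)) S} = card (UNIV :: 'a set) ^ card S"
proof -
  have "bij_betw (\<lambda>x. mdiff x (idm n)) {x :: 'a mat. supported_on (mdiff x (idm n)) S} (mats_on S)"
    by (rule bij_betw_byWitness[where f' = "\<lambda>X i j. idm n i j + X i j"])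
       (auto simp: mats_on_def mdiff_def)
  then show ?thesis
    using card_mats_on[OF assms] by (simp add: bij_betw_same_card)
qed

lemma card_UR_supported_on:
  "card {x \<in> (UR n I :: 'a mat set). supported_on (mdiff x (idm n)) P}
    = card (UNIV :: 'a::{finite,field} set) ^ card (block_offdiag n I \<inter> strict_upper n \<inter> P)"
proof -
  have "{x \<in> (UR n I :: 'a mat set). supported_on (mdiff x (idm n)) P}
      = {x :: 'a mat. supported_on (mdiff x (idm n)) (block_offdiag n I \<inter> strict_upper n \<inter> P)}"
    by (auto simp: UR_iff supported_on_Int_iff)
  moreover have "finite (block_offdiag n I \<inter> strict_upper n \<inter> P)"
    using finite_strict_upper by blast
  ultimately show ?thesis
    by (simp add: card_mdiff_idm_supported_on)
qed

lemma asc_eq_card: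
  "I \<subseteq> {1..n} \<Longrightarrow> asc n I \<pi> = card (block_offdiag n I \<inter> strict_upper n - \<pi>)"
  unfolding asc_def block_offdiag_def strict_upper_def by (rule arg_cong[where f = card]) auto

lemma mdiff_mmult_UL_UR:
  assumes g: "g \<in> UL n I" and x: "x \<in> UR n I"
  shows "mdiff (mmult n g x) (idm n) = (\<lambda>i j. mdiff g (idm n) i j + mmult n g (mdiff x (idm n)) i j)"
    and "supported_on (mdiff g (idm n)) (block_diag n I)"
    and "supported_on (mmult n g (mdiff x (idm n))) (block_offdiag n I)"
proof -
  have "g \<in> UT n"
    using g UL_subset_UT by blast
  then show "mdiff (mmult n g x) (idm n) = (\<lambda>i j. mdiff g (idm n) i j + mmult n g (mdiff x (idm n)) i j)"
    using mmult_eq_add_mmult_mdiff_idm[of g n x] by (simp add: mdiff_def fun_eq_iff)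
  show "supported_on (mdiff g (idm n)) (block_diag n I)"
    using g by (simp add: UL_iff supported_on_Int_iff)
  show "supported_on (mmult n g (mdiff x (idm n))) (block_offdiag n I)"
    using x by (intro supported_on_mmult_UL_block_offdiag[OF g]) (simp add: UR_iff supported_on_Int_iff)
qed

lemma mmult_UL_UR_in_UP:
  assumes g: "g \<in> UL n I" and x: "x \<in> UR n I"
  shows "mmult n g x \<in> UP n I"
proof -
  have "(i, j) \<notin> block_diag n I \<union> block_offdiag n I" if "i \<notin> I" "j \<in> I" for i j
    using that by (auto simp: block_diag_def block_offdiag_def)
  then have "mdiff g (idm n) i j = 0" "mmult n g (mdiff x (idm n)) i j = 0"
    if "i \<notin> I" "j \<in> I" for i j
    using that mdiff_mmult_UL_UR(2,3)[OF g x] unfolding supported_on_def by blast+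
  then have "mdiff (mmult n g x) (idm n) i j = 0" if "i \<notin> I" "j \<in> I" for i j
    using that mdiff_mmult_UL_UR(1)[OF g x] by simp
  moreover have "mmult n g x \<in> UT n"
    using g x UL_subset_UT UR_subset_UT by (blast intro: mmult_in_UT)
  ultimately show ?thesis
    by (auto simp: UP_def mdiff_def)
qed

lemma mmult_UL_UR_in_UTpat_iff:
  assumes \<pi>: "\<pi> \<in> NO n" and g: "g \<in> UL n I" and x: "x \<in> UR n I"
  shows "mmult n g x \<in> UTpat n \<pi> \<longleftrightarrow> g \<in> UTpat n \<pi> \<and> x \<in> UTpat n \<pi>"
proof -
  have gU: "g \<in> UT n" and xU: "x \<in> UT n"
    using g x UL_subset_UT UR_subset_UT by blast+
  have disjoint: "block_diag n I \<inter> block_offdiag n I = {}"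
    by (auto simp: block_diag_def block_offdiag_def)
  have "supported_on (mmult n g (mdiff x (idm n))) \<pi> \<longleftrightarrow> supported_on (mdiff x (idm n)) \<pi>"
    using xU by (intro supported_on_mmult_left_iff[OF gU _ NO_up_closed[OF \<pi>]]) (simp add: UT_iff_mdiff_idm)
  then show ?thesis
    using supported_on_add_disjoint_iff[OF mdiff_mmult_UL_UR(2,3)[OF g x] disjoint]
      mmult_in_UT[OF gU xU] gU xU
    by (simp add: UTpat_iff mdiff_mmult_UL_UR(1)[OF g x])
qed

lemma Defl_Res_delta:
  fixes g :: "'a::{finite,field} mat"
  assumes \<pi>: "\<pi> \<in> NO n" and I: "I \<subseteq> {1..n}" and g: "g \<in> UL n I"
  shows "Defl n I (Res n I (delta n \<pi>)) g
    = (if g \<in> UTpat n \<pi> then inverse (of_nat (card (UNIV :: 'a set))) ^ asc n I \<pi> else 0)"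
proof -
  let ?q = "card (UNIV :: 'a set)"
  let ?T = "block_offdiag n I \<inter> strict_upper n"
  have card_UR: "card {x \<in> (UR n I :: 'a mat set). supported_on (mdiff x (idm n)) P} = ?q ^ card (?T \<inter> P)"
    for P
    by (rule card_UR_supported_on)
  have finUR: "finite (UR n I :: 'a mat set)"
    using finite_UT UR_subset_UT by (rule finite_subset[rotated])
  have "Res n I (delta n \<pi>) (mmult n g x) = (if g \<in> UTpat n \<pi> \<and> x \<in> UTpat n \<pi> then 1 else 0)"
    if "x \<in> UR n I" for x
    using mmult_UL_UR_in_UP[OF g that] mmult_UL_UR_in_UTpat_iff[OF \<pi> g that]
    by (simp add: Res_def delta_def)
  then have "(\<Sum>x\<in>UR n I. Res n I (delta n \<pi>) (mmult n g x))
      = (\<Sum>x\<in>(UR n I :: 'a mat set). if g \<in> UTpat n \<pi> \<and> x \<in> UTpat n \<pi> then 1 else 0)"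
    by (auto intro: sum.cong)
  also have "\<dots> = (if g \<in> UTpat n \<pi> then of_nat (card {x \<in> (UR n I :: 'a mat set). x \<in> UTpat n \<pi>}) else 0)"
    using finUR by (cases "g \<in> UTpat n \<pi>") (simp_all add: sum.inter_filter[symmetric])
  finally have "(\<Sum>x\<in>UR n I. Res n I (delta n \<pi>) (mmult n g x))
      = (if g \<in> UTpat n \<pi> then of_nat (card {x \<in> (UR n I :: 'a mat set). x \<in> UTpat n \<pi>}) else 0)" .
  moreover have "{x \<in> UR n I. x \<in> UTpat n \<pi>} = {x \<in> (UR n I :: 'a mat set). supported_on (mdiff x (idm n)) \<pi>}"
    using UR_subset_UT by (auto simp: UTpat_iff)
  moreover have "card (UR n I :: 'a mat set) = ?q ^ (card (?T \<inter> \<pi>) + card (?T - \<pi>))"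
    using card_UR[of UNIV] card_Int_Diff[of ?T \<pi>] finite_strict_upper
    by (simp add: supported_on_def)
  ultimately show ?thesis
    using card_UR[of \<pi>]
    by (simp add: Defl_def asc_eq_card[OF I] power_add power_inverse field_simps)
qed

lemma Delta_delta:
  assumes \<pi>: "\<pi> \<in> NO n"
  shows "Delta n (delta n \<pi> :: 'a::{finite,field} mat \<Rightarrow> complex)
    = (\<lambda>(a, b). \<Sum>I\<in>Pow {1..n}. inverse (of_nat (card (UNIV :: 'a set))) ^ asc n I \<pi>
        * delta (card I) (shres I \<pi>) a * delta (n - card I) (shres ({1..n} - I) \<pi>) b)"
proof (intro ext, clarify)
  fix a b :: "'a mat"
  have summand: "(if a \<in> UT (card I) \<and> b \<in> UT (n - card I)
        then Defl n I (Res n I (delta n \<pi>)) (glue n I a b) else 0)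
      = inverse (of_nat (card (UNIV :: 'a set))) ^ asc n I \<pi>
        * delta (card I) (shres I \<pi>) a * delta (n - card I) (shres ({1..n} - I) \<pi>) b"
    if I: "I \<subseteq> {1..n}" for I
  proof (cases "a \<in> UT (card I) \<and> b \<in> UT (n - card I)")
    case True
    have card: "card ({1..n} - I) = n - card I"
      using I by (simp add: card_Diff_subset finite_subset)
    then have a: "a \<in> UT (card I)" and b: "b \<in> UT (card ({1..n} - I))"
      using True by simp_all
    show ?thesis
      using Defl_Res_delta[OF \<pi> I glue_in_UL[OF I a b]] glue_in_UTpat_iff[OF I a b] True card
      by (simp add: delta_def)
  qed (use UTpat_subset_UT in \<open>auto simp: delta_def\<close>)
  show "Delta n (delta n \<pi>) (a, b) = (\<Sum>I\<in>Pow {1..n}. inverse (of_nat (card (UNIV :: 'a set)))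
      ^ asc n I \<pi> * delta (card I) (shres I \<pi>) a * delta (n - card I) (shres ({1..n} - I) \<pi>) b)"
    unfolding Delta_def prod.case by (rule sum.cong[OF refl], rule summand) simp
qed

lemma Delta_add: "Delta n (\<lambda>x. f x + g x) = (\<lambda>p. Delta n f p + Delta n g p)"
proof -
  have "Res n I (\<lambda>x. f x + g x) = (\<lambda>y. Res n I f y + Res n I g y)" for I
    by (auto simp: Res_def)
  then have "Defl n I (Res n I (\<lambda>x. f x + g x)) h = Defl n I (Res n I f) h + Defl n I (Res n I g) h"
    for I h
    by (simp add: Defl_def sum.distrib add_divide_distrib)
  then show ?thesis
    by (auto simp: Delta_def fun_eq_iff sum.distrib[symmetric] intro!: sum.cong)
qed

lemma Delta_scale: "Delta n (\<lambda>x. c * f x) = (\<lambda>p. c * Delta n f p)"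
proof -
  have "Res n I (\<lambda>x. c * f x) = (\<lambda>y. c * Res n I f y)" for I
    by (auto simp: Res_def)
  then have "Defl n I (Res n I (\<lambda>x. c * f x)) h = c * Defl n I (Res n I f) h" for I h
    by (simp add: Defl_def sum_distrib_left)
  then show ?thesis
    by (auto simp: Delta_def fun_eq_iff sum_distrib_left intro!: sum.cong)
qed

lemma Delta_in_cspan_tens:
  fixes f :: "'a::{finite,field} mat \<Rightarrow> complex"
  assumes f: "f \<in> scf n"
  shows "Delta n f \<in> cspan {tens u v | u v k. k \<le> n \<and> u \<in> (scf k :: ('a mat \<Rightarrow> complex) set)
    \<and> v \<in> (scf (n - k) :: ('a mat \<Rightarrow> complex) set)}" (is "_ \<in> cspan ?W")
proof (rule cspan_linear_image[where F = "Delta n"])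
  show "f \<in> cspan (delta n ` NO n)"
    using f by (simp add: scf_eq_cspan_delta)
next
  fix s :: "'a mat \<Rightarrow> complex"
  assume "s \<in> delta n ` NO n"
  then obtain \<pi> where \<pi>: "\<pi> \<in> NO n" and s: "s = delta n \<pi>"
    by blast
  have "tens (delta (card I) (shres I \<pi>)) (delta (n - card I) (shres ({1..n} - I) \<pi>)) \<in> ?W"
    if I: "I \<subseteq> {1..n}" for I
  proof -
    have "card I \<le> n" "card ({1..n} - I) = n - card I"
      using I by (auto simp: card_Diff_subset finite_subset dest: card_mono[rotated])
    then show ?thesis
      using shres_NO[OF \<pi> I] shres_NO[OF \<pi> Diff_subset[of "{1..n}" I]]
      by (auto simp: scf_eq_cspan_delta intro!: cspan_superset)
  qed
  then have "(\<lambda>p. \<Sum>I\<in>Pow {1..n}. inverse (of_nat (card (UNIV :: 'a set))) ^ asc n I \<pi>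
      * tens (delta (card I) (shres I \<pi>)) (delta (n - card I) (shres ({1..n} - I) \<pi>)) p) \<in> cspan ?W"
    by (intro cspan_sum cspan_scale cspan_superset) auto
  then show "Delta n s \<in> cspan ?W"
    by (simp add: s Delta_delta[OF \<pi>] tens_def split_def mult.assoc)
qed (simp_all add: Delta_add Delta_scale)

theorem corollary7p6:
  shows "(\<forall>n. (scf n :: ('a::{finite,field} mat \<Rightarrow> complex) set) \<subseteq> cf n)
    \<and> (\<forall>n m f h. f \<in> (scf n :: ('a mat \<Rightarrow> complex) set) \<and> h \<in> scf m \<longrightarrow> mu n m f h \<in> scf (n + m))
    \<and> (\<forall>n f. f \<in> (scf n :: ('a mat \<Rightarrow> complex) set) \<longrightarrow>
          Delta n f \<in> cspan {tens u v | u v k. k \<le> n \<and> u \<in> scf k \<and> v \<in> scf (n - k)})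
    \<and> (\<forall>n. (scf n :: ('a mat \<Rightarrow> complex) set) = cspan (delta n ` NO n))
    \<and> (\<forall>n (c :: (nat \<times> nat) set \<Rightarrow> complex).
          (\<forall>g :: 'a mat. (\<Sum>\<pi>\<in>NO n. c \<pi> * delta n \<pi> g) = 0) \<longrightarrow> (\<forall>\<pi>\<in>NO n. c \<pi> = 0))
    \<and> (\<forall>n m \<pi> \<rho>. \<pi> \<in> NO n \<and> \<rho> \<in> NO m \<longrightarrow>
          mu n m (delta n \<pi>) (delta m \<rho>) = (delta (n + m) (ostar n m \<pi> \<rho>) :: 'a mat \<Rightarrow> complex))
    \<and> (\<forall>n \<pi>. \<pi> \<in> NO n \<longrightarrow>
          Delta n (delta n \<pi> :: 'a mat \<Rightarrow> complex)
          = (\<lambda>(a, b). \<Sum>I\<in>Pow {1..n}.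
               inverse (of_nat (card (UNIV :: 'a set))) ^ asc n I \<pi>
               * delta (card I) (shres I \<pi>) a
               * delta (n - card I) (shres ({1..n} - I) \<pi>) b))"
  apply (intro conjI allI impI)
  subgoal by (rule scf_subset_cf)
  subgoal by (blast intro: mu_in_scf)
  subgoal by (rule Delta_in_cspan_tens)
  subgoal by (rule scf_eq_cspan_delta)
  subgoal by (rule delta_linear_independent)
  subgoal by (blast intro: mu_delta)
  subgoal by (rule Delta_delta)
  done

end
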